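(* Let $\mathcal{A}_{ML}(\epsilon)$ be the MLMC estimator (defined in the context) for $\mathbb{E}[X]$, based on random variables $\{X_\ell\}$ satisfying Assumption A. Suppose $V_0>0$ and: (i) if $\beta=\gamma$, then $\lim_{k\to\infty}S_k=\infty$ and $$\lim_{\ell\to\infty}\mathbf{1}_{\{V_\ell>0\}}\,\mathbb{E}\Big[\frac{|\Delta_\ell X-\mathbb{E}[\Delta_\ell X]|^2}{V_\ell}\,\mathbf{1}\Big\{\frac{|\Delta_\ell X-\mathbb{E}[\Delta_\ell X]|^2}{V_\ell}>\nu\, S_\ell^2\, e^{(2\alpha-\gamma)\ell}\Big\}\Big]=0\quad\text{for all }\nu>0; \qquad (\ast)$$ (ii) if $\gamma>\beta$, then $\beta<2\alpha$, condition $(\ast)$ holds, and there exists $\upsilon\in[\beta,2\alpha)$ with $\liminf_{k\to\infty}S_k e^{(\upsilon-\gamma)k/2}>1$. (No further condition is imposed when $\beta>\gamma$.) Then $$\frac{\mathcal{A}_{ML}(\epsilon)-\mathbb{E}[X_{L(\epsilon)}]}{\sqrt{\mathrm{Var}(\mathcal{A}_{ML}(\epsilon))}}\xrightarrow{d}\mathcal{N}(0,1)\quad\text{as }\epsilon\downarrow 0.$$ In particular, if $\beta>\gamma$ and $V_0>0$, this CLT always holds.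
   Context: Let $(\Omega,\mathcal F,\mathbb P)$ be a probability space, $X\in L^2(\Omega)$ a real random variable and $\{X_\ell\}_{\ell=-1}^\infty\subset L^2(\Omega)$ with $X_{-1}:=0$. Put $\Delta_\ell X:=X_\ell-X_{\ell-1}$, $V_\ell:=\mathrm{Var}(\Delta_\ell X)$, and let $C_\ell>0$ denote the (given) cost of sampling $\Delta_\ell X$. Assumption A: there are positive constants $\alpha,\beta,\gamma$ with $\min(\beta,\gamma)\le 2\alpha$, and $c_\alpha>0$, such that for all $\ell\in\mathbb N_0$: $|\mathbb E[X-X_\ell]|\le c_\alpha e^{-\alpha\ell}$; $V_\ell\le C e^{-\beta\ell}$ for some constant $C>0$; and $c e^{\gamma\ell}<C_\ell<C' e^{\gamma\ell}$ for constants $0<c<C'$. Define $S_k:=\sum_{\ell=0}^k\sqrt{V_\ell C_\ell}$. MLMC estimator: for $\epsilon>0$, $L(\epsilon):=\max(\lceil \log(c_\alpha\epsilon^{-1})/\alpha\rceil,1)$, $M_\ell(\epsilon):=\max\big(\lceil \epsilon^{-2}\sqrt{V_\ell/C_\ell}\,S_{L(\epsilon)}\rceil,1\big)$, and $\mathcal A_{ML}(\epsilon):=\sum_{\ell=0}^{L(\epsilon)}\frac{1}{M_\ell(\epsilon)}\sum_{i=1}^{M_\ell(\epsilon)}\Delta_\ell X^i$, where the family $\{\Delta_\ell X^i\}_{\ell\in\mathbb N_0,i\in\mathbb N}$ is mutually independent and each $\Delta_\ell X^i$ has the law of $\Delta_\ell X$. Conventions: $0\cdot(\pm\infty)=0$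 and $0/0=0$. *)

theory Defs
  imports "HOL-Probability.Probability"
begin

definition dX :: "(nat \<Rightarrow> 'a \<Rightarrow> real) \<Rightarrow> nat \<Rightarrow> 'a \<Rightarrow> real" where
  "dX Xs l \<omega> = Xs l \<omega> - (if l = 0 then 0 else Xs (l - 1) \<omega>)"

definition mlmc_S :: "(nat \<Rightarrow> real) \<Rightarrow> (nat \<Rightarrow> real) \<Rightarrow> nat \<Rightarrow> real" where
  "mlmc_S V C k = (\<Sum>l\<le>k. sqrt (V l * C l))"

definition mlmc_L :: "real \<Rightarrow> real \<Rightarrow> real \<Rightarrow> nat" where
  "mlmc_L c\<alpha> \<alpha> \<epsilon> = nat (max \<lceil>ln (c\<alpha> / \<epsilon>) / \<alpha>\<rceil> 1)"

definition mlmc_M :: "(nat \<Rightarrow> real) \<Rightarrow> (nat \<Rightarrow> real) \<Rightarrow> real \<Rightarrow> real \<Rightarrow> real \<Rightarrow> nat \<Rightarrow> nat" where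
  "mlmc_M V C c\<alpha> \<alpha> \<epsilon> l =
     nat (max \<lceil>(1 / \<epsilon>\<^sup>2) * sqrt (V l / C l) * mlmc_S V C (mlmc_L c\<alpha> \<alpha> \<epsilon>)\<rceil> 1)"

text \<open>The MLMC estimator built from the independent samples D l i (i >= 1).\<close>
definition mlmc_A :: "(nat \<Rightarrow> real) \<Rightarrow> (nat \<Rightarrow> real) \<Rightarrow> real \<Rightarrow> real \<Rightarrow>
    (nat \<Rightarrow> nat \<Rightarrow> 'a \<Rightarrow> real) \<Rightarrow> real \<Rightarrow> 'a \<Rightarrow> real" where
  "mlmc_A V C c\<alpha> \<alpha> D \<epsilon> \<omega> =
     (\<Sum>l\<le>mlmc_L c\<alpha> \<alpha> \<epsilon>. (1 / real (mlmc_M V C c\<alpha> \<alpha> \<epsilon> l)) *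
        (\<Sum>i=1..mlmc_M V C c\<alpha> \<alpha> \<epsilon> l. D l i \<omega>))"

definition lindeberg_cond :: "'a measure \<Rightarrow> (nat \<Rightarrow> 'a \<Rightarrow> real) \<Rightarrow> (nat \<Rightarrow> real) \<Rightarrow>
    (nat \<Rightarrow> real) \<Rightarrow> real \<Rightarrow> real \<Rightarrow> bool" where
  "lindeberg_cond M Xs V C \<alpha> \<gamma> \<longleftrightarrow>
     (\<forall>\<nu>>0. (\<lambda>l. if V l > 0 then
         (\<integral>\<omega>. ((dX Xs l \<omega> - (\<integral>\<omega>'. dX Xs l \<omega>' \<partial>M))\<^sup>2 / V l) *
            indicator {\<omega>. (dX Xs l \<omega> - (\<integral>\<omega>'. dX Xs l \<omega>' \<partial>M))\<^sup>2 / V l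
                 > \<nu> * (mlmc_S V C l)\<^sup>2 * exp ((2 * \<alpha> - \<gamma>) * real l)} \<omega> \<partial>M)
       else 0) \<longlonglongrightarrow> 0)"

end

theory Submission
  imports Defs
begin

(*
  The normalised estimator is a sum of independent centred sample averages, so the theorem
  follows from Lindeberg's central limit theorem (proved below via characteristic functions).
  Level l contributes a share V_l/(M_l sigma^2) of the variance sigma^2 of the estimator,
  times a truncated second moment of the standardised level difference at a threshold of
  order M_l^2 sigma^2. Two estimates control these truncation levels: sigma^2 >= kappa eps^2
  (if beta > gamma because S_L stays bounded, otherwise because e^((gamma - 2 alpha) L) / S_L^2
  tends to 0), and M_l >= eps^-2 sqrt (V_l / C_l) S_L. Hence each fixed level has a truncation
  level tending to infinity, while the levels beyond a fixed l0 are small uniformly in eps: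
  by geometric decay of sqrt (V_l C_l) when beta > gamma, and by the Lindeberg-type
  condition on the level differences otherwise.
*)

section \<open>Lindeberg's central limit theorem\<close>

lemma exp_minus_taylor_bound:
  fixes x :: real
  assumes "x \<ge> 0"
  shows "\<bar>exp (- x) - (1 - x)\<bar> \<le> x\<^sup>2 / 2"
proof -
  define f where "f y = 1 - y + y\<^sup>2 / 2 - exp (- y)" for y :: real
  have f_deriv: "(f has_real_derivative (-1 + z + exp (- z))) (at z)" for z
    unfolding f_def by (auto intro!: derivative_eq_intros simp: power2_eq_square)
  have "f 0 \<le> f x"
  proof (rule DERIV_nonneg_imp_nondecreasing[OF assms])
    fix z
    show "\<exists>d. (f has_real_derivative d) (at z) \<and> 0 \<le> d"
      using f_deriv[of z] exp_ge_add_one_self[of "-z"] by auto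
  qed
  then show ?thesis
    using exp_ge_add_one_self[of "-x"] by (simp add: f_def)
qed

context prob_space
begin

lemma second_moment_le_truncated:
  fixes Y :: "'a \<Rightarrow> real"
  assumes [measurable]: "Y \<in> borel_measurable M"
    and sq: "integrable M (\<lambda>x. (Y x)\<^sup>2)" and "\<eta> > 0"
  shows "expectation (\<lambda>x. (Y x)\<^sup>2) \<le> \<eta>\<^sup>2 + expectation (\<lambda>x. (Y x)\<^sup>2 * indicator {x. \<eta> < \<bar>Y x\<bar>} x)"
proof -
  have tail_int: "integrable M (\<lambda>x. (Y x)\<^sup>2 * indicator {x. \<eta> < \<bar>Y x\<bar>} x)"
    by (rule Bochner_Integration.integrable_bound[OF sq]) (auto simp: indicator_def)
  have "(Y x)\<^sup>2 \<le> \<eta>\<^sup>2 + (Y x)\<^sup>2 * indicator {x. \<eta> < \<bar>Y x\<bar>} x" for x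
  proof (cases "\<eta> < \<bar>Y x\<bar>")
    case False
    then have "\<bar>Y x\<bar>\<^sup>2 \<le> \<eta>\<^sup>2" by (intro power_mono) auto
    then show ?thesis by (simp add: indicator_def)
  qed (simp add: indicator_def)
  then have "expectation (\<lambda>x. (Y x)\<^sup>2) \<le> expectation (\<lambda>x. \<eta>\<^sup>2 + (Y x)\<^sup>2 * indicator {x. \<eta> < \<bar>Y x\<bar>} x)"
    using sq tail_int by (intro integral_mono) auto
  also have "\<dots> = \<eta>\<^sup>2 + expectation (\<lambda>x. (Y x)\<^sup>2 * indicator {x. \<eta> < \<bar>Y x\<bar>} x)"
    using tail_int by (simp add: prob_space)
  finally show ?thesis .
qed

lemma char_truncated_approx:
  fixes Y :: "'a \<Rightarrow> real"
  assumes [measurable]: "Y \<in> borel_measurable M"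
    and sq: "integrable M (\<lambda>x. (Y x)\<^sup>2)" and mean: "expectation Y = 0" and "\<eta> > 0"
  defines "s \<equiv> expectation (\<lambda>x. (Y x)\<^sup>2)"
    and "\<theta> \<equiv> expectation (\<lambda>x. (Y x)\<^sup>2 * indicator {x. \<eta> < \<bar>Y x\<bar>} x)"
  shows "cmod (char (distr M borel Y) t - exp (- (t\<^sup>2 * s / 2)))
    \<le> t\<^sup>2 / 6 * (\<bar>t\<bar> * \<eta> * s + 6 * \<theta>) + (t\<^sup>2 * s / 2)\<^sup>2 / 2"
proof -
  have int: "integrable M Y"
    using square_integrable_imp_integrable[OF _ sq] by simp
  have tail_int: "integrable M (\<lambda>x. (Y x)\<^sup>2 * indicator {x. \<eta> < \<bar>Y x\<bar>} x)"
    by (rule Bochner_Integration.integrable_bound[OF sq]) (auto simp: indicator_def)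
  \<comment> \<open>Split the third-order Taylor remainder at level \<open>\<eta>\<close>: cubic below, quadratic above.\<close>
  have remainder: "min (6 * (Y x)\<^sup>2) (\<bar>t\<bar> * \<bar>Y x\<bar> ^ 3)
      \<le> \<bar>t\<bar> * \<eta> * (Y x)\<^sup>2 + 6 * ((Y x)\<^sup>2 * indicator {x. \<eta> < \<bar>Y x\<bar>} x)" for x
  proof (cases "\<eta> < \<bar>Y x\<bar>")
    case True
    have "min (6 * (Y x)\<^sup>2) (\<bar>t\<bar> * \<bar>Y x\<bar> ^ 3) \<le> 6 * (Y x)\<^sup>2" by simp
    moreover have "0 \<le> \<bar>t\<bar> * \<eta> * (Y x)\<^sup>2" using \<open>\<eta> > 0\<close> by simp
    ultimately show ?thesis using True by (simp add: indicator_def)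
  next
    case False
    have "\<bar>t\<bar> * \<bar>Y x\<bar> ^ 3 = (\<bar>t\<bar> * (Y x)\<^sup>2) * \<bar>Y x\<bar>"
      by (simp add: power2_eq_square power3_eq_cube abs_mult)
    also have "\<dots> \<le> (\<bar>t\<bar> * (Y x)\<^sup>2) * \<eta>" using False by (intro mult_left_mono) auto
    finally show ?thesis using False by (simp add: indicator_def algebra_simps)
  qed
  have "cmod (char (distr M borel Y) t - (1 - t\<^sup>2 * s / 2))
      \<le> t\<^sup>2 / 6 * expectation (\<lambda>x. min (6 * (Y x)\<^sup>2) (\<bar>t\<bar> * \<bar>Y x\<bar> ^ 3))"
    unfolding s_def by (rule char_approx3') (use int sq mean in auto)
  also have "\<dots> \<le> t\<^sup>2 / 6 * expectation (\<lambda>x. \<bar>t\<bar> * \<eta> * (Y x)\<^sup>2 + 6 * ((Y x)\<^sup>2 * indicator {x. \<eta> < \<bar>Y x\<bar>} x))"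
  proof (intro mult_left_mono integral_mono)
    show "integrable M (\<lambda>x. min (6 * (Y x)\<^sup>2) (\<bar>t\<bar> * \<bar>Y x\<bar> ^ 3))"
      by (rule Bochner_Integration.integrable_bound[where f="\<lambda>x. 6 * (Y x)\<^sup>2"]) (use sq in auto)
  qed (use sq tail_int remainder in auto)
  also have "\<dots> = t\<^sup>2 / 6 * (\<bar>t\<bar> * \<eta> * s + 6 * \<theta>)"
    unfolding s_def \<theta>_def using sq tail_int by simp
  finally have char_taylor: "cmod (char (distr M borel Y) t - (1 - t\<^sup>2 * s / 2))
      \<le> t\<^sup>2 / 6 * (\<bar>t\<bar> * \<eta> * s + 6 * \<theta>)" .
  have "s \<ge> 0" unfolding s_def by simp
  then have exp_taylor: "cmod (complex_of_real (1 - t\<^sup>2 * s / 2) - exp (- (t\<^sup>2 * s / 2)))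
      \<le> (t\<^sup>2 * s / 2)\<^sup>2 / 2"
    using exp_minus_taylor_bound[of "t\<^sup>2 * s / 2"]
    by (simp del: of_real_diff add: of_real_diff[symmetric] abs_minus_commute)
  show ?thesis
    using norm_triangle_le[OF add_mono[OF char_taylor exp_taylor]] by simp
qed

lemma char_sum_lindeberg_bound:
  fixes Y :: "'i \<Rightarrow> 'a \<Rightarrow> real"
  assumes fin: "finite I" and indep: "indep_vars (\<lambda>_. borel) Y I"
    and sq: "\<And>j. j \<in> I \<Longrightarrow> integrable M (\<lambda>x. (Y j x)\<^sup>2)"
    and mean: "\<And>j. j \<in> I \<Longrightarrow> expectation (Y j) = 0"
    and var1: "(\<Sum>j\<in>I. expectation (\<lambda>x. (Y j x)\<^sup>2)) = 1"
    and "\<eta> > 0"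
  defines "\<Lambda> \<equiv> \<Sum>j\<in>I. expectation (\<lambda>x. (Y j x)\<^sup>2 * indicator {x. \<eta> < \<bar>Y j x\<bar>} x)"
  shows "cmod (char (distr M borel (\<lambda>x. \<Sum>j\<in>I. Y j x)) t - exp (- (t\<^sup>2) / 2))
    \<le> \<bar>t\<bar> ^ 3 * \<eta> / 6 + t ^ 4 * \<eta>\<^sup>2 / 8 + (t\<^sup>2 + t ^ 4 / 8) * \<Lambda>"
proof -
  define s where "s j = expectation (\<lambda>x. (Y j x)\<^sup>2)" for j
  define \<theta> where "\<theta> j = expectation (\<lambda>x. (Y j x)\<^sup>2 * indicator {x. \<eta> < \<bar>Y j x\<bar>} x)" for j
  have rv[measurable]: "random_variable borel (Y j)" if "j \<in> I" for j
    using indep that unfolding indep_vars_def2 by auto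
  have s_nonneg: "s j \<ge> 0" for j unfolding s_def by simp
  have \<theta>_nonneg: "\<theta> j \<ge> 0" for j unfolding \<theta>_def by (rule integral_nonneg_AE) auto
  have s_le: "s j \<le> \<eta>\<^sup>2 + \<Lambda>" if j: "j \<in> I" for j
  proof -
    have "\<theta> j \<le> \<Lambda>" unfolding \<Lambda>_def \<theta>_def[symmetric]
      using fin j \<theta>_nonneg by (intro member_le_sum) auto
    then show ?thesis
      using second_moment_le_truncated[OF rv[OF j] sq[OF j] \<open>\<eta> > 0\<close>] unfolding s_def \<theta>_def by simp
  qed
  \<comment> \<open>The limit factorises like the characteristic function, so the error is a sum of single-variable errors.\<close>
  have "exp (- (t\<^sup>2) / 2) = (\<Prod>j\<in>I. exp (- (t\<^sup>2 * s j / 2)))"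
  proof -
    have "- (t\<^sup>2) / 2 = (\<Sum>j\<in>I. - (t\<^sup>2 * s j / 2))"
      using var1 unfolding s_def
      by (simp add: sum_negf sum_divide_distrib[symmetric] sum_distrib_left[symmetric])
    then show ?thesis by (simp add: exp_sum[OF fin])
  qed
  then have "cmod (char (distr M borel (\<lambda>x. \<Sum>j\<in>I. Y j x)) t - exp (- (t\<^sup>2) / 2))
      \<le> (\<Sum>j\<in>I. cmod (char (distr M borel (Y j)) t - exp (- (t\<^sup>2 * s j / 2))))"
    unfolding char_distr_sum[OF indep] using s_nonneg
    by (auto intro!: norm_prod_diff real_distribution.cmod_char_le_1 real_distribution_distr)
  also have "\<dots> \<le> (\<Sum>j\<in>I. t\<^sup>2 / 6 * (\<bar>t\<bar> * \<eta> * s j + 6 * \<theta> j) + (t\<^sup>2 * s j / 2) / 2 * (t\<^sup>2 / 2 * (\<eta>\<^sup>2 + \<Lambda>)))"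
  proof (rule sum_mono)
    fix j assume j: "j \<in> I"
    have "(t\<^sup>2 * s j / 2)\<^sup>2 / 2 = (t\<^sup>2 * s j / 2) / 2 * (t\<^sup>2 / 2 * s j)"
      by (simp add: power2_eq_square)
    also have "\<dots> \<le> (t\<^sup>2 * s j / 2) / 2 * (t\<^sup>2 / 2 * (\<eta>\<^sup>2 + \<Lambda>))"
      using s_le[OF j] s_nonneg[of j] by (intro mult_left_mono) auto
    finally show "cmod (char (distr M borel (Y j)) t - exp (- (t\<^sup>2 * s j / 2)))
      \<le> t\<^sup>2 / 6 * (\<bar>t\<bar> * \<eta> * s j + 6 * \<theta> j) + (t\<^sup>2 * s j / 2) / 2 * (t\<^sup>2 / 2 * (\<eta>\<^sup>2 + \<Lambda>))"
      using char_truncated_approx[OF rv[OF j] sq[OF j] mean[OF j] \<open>\<eta> > 0\<close>, of t]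
      unfolding s_def \<theta>_def by linarith
  qed
  also have "\<dots> = (\<Sum>j\<in>I. (t\<^sup>2 / 6 * \<bar>t\<bar> * \<eta> + t\<^sup>2 / 4 * (t\<^sup>2 / 2 * (\<eta>\<^sup>2 + \<Lambda>))) * s j + t\<^sup>2 * \<theta> j)"
    by (rule sum.cong) (simp_all add: algebra_simps)
  also have "\<dots> = (t\<^sup>2 / 6 * \<bar>t\<bar> * \<eta> + t\<^sup>2 / 4 * (t\<^sup>2 / 2 * (\<eta>\<^sup>2 + \<Lambda>))) * (\<Sum>j\<in>I. s j) + t\<^sup>2 * \<Lambda>"
    unfolding \<Lambda>_def \<theta>_def by (simp add: sum.distrib sum_distrib_left)
  also have "\<dots> = \<bar>t\<bar> ^ 3 * \<eta> / 6 + t ^ 4 * \<eta>\<^sup>2 / 8 + (t\<^sup>2 + t ^ 4 / 8) * \<Lambda>"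
    using var1 unfolding s_def[symmetric]
    by (simp add: power2_eq_square power3_eq_cube power4_eq_xxxx algebra_simps abs_mult_self_eq)
  finally show ?thesis .
qed

theorem lindeberg_clt:
  fixes Y :: "nat \<Rightarrow> 'i \<Rightarrow> 'a \<Rightarrow> real" and I :: "nat \<Rightarrow> 'i set"
  assumes fin: "\<And>n. finite (I n)"
    and indep: "\<And>n. indep_vars (\<lambda>_. borel) (Y n) (I n)"
    and sq: "\<And>n j. j \<in> I n \<Longrightarrow> integrable M (\<lambda>x. (Y n j x)\<^sup>2)"
    and mean: "\<And>n j. j \<in> I n \<Longrightarrow> expectation (Y n j) = 0"
    and var1: "\<And>n. (\<Sum>j\<in>I n. expectation (\<lambda>x. (Y n j x)\<^sup>2)) = 1"
    and lindeberg: "\<And>\<eta>. \<eta> > 0 \<Longrightarrow>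
       (\<lambda>n. \<Sum>j\<in>I n. expectation (\<lambda>x. (Y n j x)\<^sup>2 * indicator {x. \<eta> < \<bar>Y n j x\<bar>} x)) \<longlonglongrightarrow> 0"
  shows "weak_conv_m (\<lambda>n. distr M borel (\<lambda>x. \<Sum>j\<in>I n. Y n j x)) std_normal_distribution"
proof (rule levy_continuity)
  fix n
  have [measurable]: "random_variable borel (Y n j)" if "j \<in> I n" for j
    using indep[of n] that unfolding indep_vars_def2 by auto
  then show "real_distribution (distr M borel (\<lambda>x. \<Sum>j\<in>I n. Y n j x))"
    by (intro real_distribution_distr borel_measurable_sum) auto
next
  show "real_distribution std_normal_distribution" by (rule real_dist_normal_dist)
next
  fix t :: real
  define \<Lambda> where "\<Lambda> \<eta> n = (\<Sum>j\<in>I n. expectation (\<lambda>x. (Y n j x)\<^sup>2 * indicator {x. \<eta> < \<bar>Y n j x\<bar>} x))" for \<eta> n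
  define err where "err \<eta> = \<bar>t\<bar> ^ 3 * \<eta> / 6 + t ^ 4 * \<eta>\<^sup>2 / 8" for \<eta>
  have bound: "cmod (char (distr M borel (\<lambda>x. \<Sum>j\<in>I n. Y n j x)) t - exp (- (t\<^sup>2) / 2))
     \<le> err \<eta> + (t\<^sup>2 + t ^ 4 / 8) * \<Lambda> \<eta> n" if "\<eta> > 0" for \<eta> n
    unfolding \<Lambda>_def err_def by (rule char_sum_lindeberg_bound[OF fin indep sq mean var1 that])
  have err: "(err \<longlongrightarrow> 0) (at_right 0)"
    unfolding err_def by (auto intro!: tendsto_eq_intros)
  show "(\<lambda>n. char (distr M borel (\<lambda>x. \<Sum>j\<in>I n. Y n j x)) t) \<longlonglongrightarrow> char std_normal_distribution t"
    unfolding char_std_normal_distribution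
  proof (rule tendstoI)
    fix r :: real assume "r > 0"
    have "\<forall>\<^sub>F \<eta> in at_right 0. 0 < \<eta> \<and> err \<eta> < r / 2"
      using \<open>r > 0\<close> by (intro eventually_conj eventually_at_right_less order_tendstoD(2)[OF err]) auto
    then obtain \<eta> where \<eta>: "\<eta> > 0" "err \<eta> < r / 2"
      using eventually_happens'[OF trivial_limit_at_right_real] by blast
    have "(\<lambda>n. err \<eta> + (t\<^sup>2 + t ^ 4 / 8) * \<Lambda> \<eta> n) \<longlonglongrightarrow> err \<eta> + (t\<^sup>2 + t ^ 4 / 8) * 0"
      unfolding \<Lambda>_def by (intro tendsto_intros lindeberg \<eta>(1))
    moreover have "err \<eta> + (t\<^sup>2 + t ^ 4 / 8) * 0 < r" using \<eta>(2) \<open>r > 0\<close> by simp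
    ultimately have "\<forall>\<^sub>F n in sequentially. err \<eta> + (t\<^sup>2 + t ^ 4 / 8) * \<Lambda> \<eta> n < r"
      by (rule order_tendstoD(2))
    then show "\<forall>\<^sub>F n in sequentially. dist (char (distr M borel (\<lambda>x. \<Sum>j\<in>I n. Y n j x)) t) (exp (- (t\<^sup>2) / 2)) < r"
      by eventually_elim (use bound[OF \<eta>(1)] in \<open>auto simp: dist_norm intro: le_less_trans\<close>)
  qed
qed

definition sq_tail :: "('a \<Rightarrow> real) \<Rightarrow> real \<Rightarrow> real" where
  "sq_tail W c = expectation (\<lambda>x. (W x)\<^sup>2 * indicator {x. c < (W x)\<^sup>2} x)"

lemma sq_tail_nonneg: "sq_tail W c \<ge> 0"
  unfolding sq_tail_def by (rule integral_nonneg_AE) (auto simp: indicator_def)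

context
  fixes W :: "'a \<Rightarrow> real"
  assumes W_measurable[measurable]: "W \<in> borel_measurable M"
    and W_square_integrable: "integrable M (\<lambda>x. (W x)\<^sup>2)"
begin

lemma integrable_sq_tail: "integrable M (\<lambda>x. (W x)\<^sup>2 * indicator {x. c < (W x)\<^sup>2} x)"
  by (rule Bochner_Integration.integrable_bound[OF W_square_integrable]) (auto simp: indicator_def)

lemma sq_tail_le: "sq_tail W c \<le> expectation (\<lambda>x. (W x)\<^sup>2)"
  unfolding sq_tail_def
  by (rule integral_mono[OF integrable_sq_tail W_square_integrable]) (auto simp: indicator_def)

lemma sq_tail_antimono: "c \<le> c' \<Longrightarrow> sq_tail W c' \<le> sq_tail W c"
  unfolding sq_tail_def
  by (rule integral_mono[OF integrable_sq_tail integrable_sq_tail]) (auto simp: indicator_def)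

lemma sq_tail_tendsto_0: "(sq_tail W \<longlongrightarrow> 0) at_top"
proof -
  have "((\<lambda>c. expectation (\<lambda>x. (W x)\<^sup>2 * indicator {x. c < (W x)\<^sup>2} x)) \<longlongrightarrow> expectation (\<lambda>x. 0)) at_top"
  proof (rule integral_dominated_convergence_at_top[where w="\<lambda>x. (W x)\<^sup>2"])
    show "AE x in M. ((\<lambda>c. (W x)\<^sup>2 * indicator {x. c < (W x)\<^sup>2} x) \<longlongrightarrow> 0) at_top"
    proof (rule AE_I2)
      fix x
      have "\<forall>\<^sub>F c in at_top. (W x)\<^sup>2 * indicator {x. c < (W x)\<^sup>2} x = (0::real)"
        using eventually_ge_at_top[of "(W x)\<^sup>2"] by eventually_elim (auto simp: indicator_def)
      then show "((\<lambda>c. (W x)\<^sup>2 * indicator {x. c < (W x)\<^sup>2} x) \<longlongrightarrow> 0) at_top"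
        by (rule tendsto_eventually)
    qed
  qed (use W_square_integrable in \<open>auto simp: indicator_def\<close>)
  then show ?thesis unfolding sq_tail_def[abs_def] by simp
qed

end

lemma sq_tail_scaled:
  fixes W :: "'a \<Rightarrow> real"
  assumes "\<eta> \<ge> 0" "c > 0"
  shows "expectation (\<lambda>x. (W x / c)\<^sup>2 * indicator {x. \<eta> < \<bar>W x / c\<bar>} x) = sq_tail W (\<eta>\<^sup>2 * c\<^sup>2) / c\<^sup>2"
proof -
  have "\<eta> < \<bar>W x / c\<bar> \<longleftrightarrow> \<eta>\<^sup>2 * c\<^sup>2 < (W x)\<^sup>2" for x
  proof -
    have "\<eta> < \<bar>W x / c\<bar> \<longleftrightarrow> \<eta>\<^sup>2 < (W x / c)\<^sup>2"
      using assms(1) abs_le_square_iff[of "W x / c" \<eta>] by (auto simp: not_le[symmetric])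
    also have "\<dots> \<longleftrightarrow> \<eta>\<^sup>2 * c\<^sup>2 < (W x)\<^sup>2"
      using assms(2) by (simp add: power_divide pos_less_divide_eq)
    finally show ?thesis .
  qed
  then show ?thesis
    unfolding sq_tail_def by (simp add: power_divide indicator_def)
qed

lemma same_distr_integral:
  fixes D Z :: "'a \<Rightarrow> real" and g :: "real \<Rightarrow> real"
  assumes [measurable]: "D \<in> borel_measurable M" "Z \<in> borel_measurable M" "g \<in> borel_measurable borel"
    and law: "distr M borel D = distr M borel Z"
  shows "expectation (\<lambda>x. g (D x)) = expectation (\<lambda>x. g (Z x))"
    and "integrable M (\<lambda>x. g (D x)) \<longleftrightarrow> integrable M (\<lambda>x. g (Z x))"
proof -
  have "expectation (\<lambda>x. g (D x)) = integral\<^sup>L (distr M borel D) g"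
    by (rule integral_distr[symmetric]) auto
  also have "\<dots> = expectation (\<lambda>x. g (Z x))"
    unfolding law by (rule integral_distr) auto
  finally show "expectation (\<lambda>x. g (D x)) = expectation (\<lambda>x. g (Z x))" .
  have "integrable M (\<lambda>x. g (D x)) \<longleftrightarrow> integrable (distr M borel D) g"
    by (rule integrable_distr_eq[symmetric]) auto
  also have "\<dots> \<longleftrightarrow> integrable M (\<lambda>x. g (Z x))"
    unfolding law by (rule integrable_distr_eq) auto
  finally show "integrable M (\<lambda>x. g (D x)) \<longleftrightarrow> integrable M (\<lambda>x. g (Z x))" .
qed

lemma expectation_square_sum_indep:
  fixes Z :: "'i \<Rightarrow> 'a \<Rightarrow> real"
  assumes fin: "finite I" and indep: "indep_vars (\<lambda>_. borel) Z I"
    and sq: "\<And>j. j \<in> I \<Longrightarrow> integrable M (\<lambda>x. (Z j x)\<^sup>2)"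
    and mean: "\<And>j. j \<in> I \<Longrightarrow> expectation (Z j) = 0"
  shows "expectation (\<lambda>x. (\<Sum>j\<in>I. Z j x)\<^sup>2) = (\<Sum>j\<in>I. expectation (\<lambda>x. (Z j x)\<^sup>2))"
proof -
  have rv[measurable]: "random_variable borel (Z j)" if "j \<in> I" for j
    using indep that unfolding indep_vars_def2 by auto
  have int: "integrable M (Z j)" if "j \<in> I" for j
    using square_integrable_imp_integrable[OF rv[OF that] sq[OF that]] .
  have int_prod: "integrable M (\<lambda>x. Z j x * Z k x)" if "j \<in> I" "k \<in> I" for j k
  proof (rule Bochner_Integration.integrable_bound[where f="\<lambda>x. (Z j x)\<^sup>2 + (Z k x)\<^sup>2"])
    show "AE x in M. norm (Z j x * Z k x) \<le> norm ((Z j x)\<^sup>2 + (Z k x)\<^sup>2)"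
    proof (rule AE_I2)
      fix x
      have "2 * \<bar>Z j x\<bar> * \<bar>Z k x\<bar> \<le> (Z j x)\<^sup>2 + (Z k x)\<^sup>2"
        using sum_squares_bound[of "\<bar>Z j x\<bar>" "\<bar>Z k x\<bar>"] by simp
      moreover have "0 \<le> \<bar>Z j x\<bar> * \<bar>Z k x\<bar>" by simp
      ultimately have "\<bar>Z j x\<bar> * \<bar>Z k x\<bar> \<le> (Z j x)\<^sup>2 + (Z k x)\<^sup>2" by linarith
      then show "norm (Z j x * Z k x) \<le> norm ((Z j x)\<^sup>2 + (Z k x)\<^sup>2)"
        by (simp add: abs_mult)
    qed
  qed (use that sq in auto)
  have cross: "expectation (\<lambda>x. Z j x * Z k x) = (if j = k then expectation (\<lambda>x. (Z j x)\<^sup>2) else 0)"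
    if "j \<in> I" "k \<in> I" for j k
  proof (cases "j = k")
    case False
    have "indep_vars (\<lambda>_. borel) Z {j, k}"
      by (rule indep_vars_subset[OF indep]) (use that in auto)
    then have "expectation (\<lambda>x. \<Prod>i\<in>{j, k}. Z i x) = (\<Prod>i\<in>{j, k}. expectation (Z i))"
      by (rule indep_vars_lebesgue_integral[rotated]) (use that int in auto)
    then show ?thesis using False mean that by simp
  qed (simp add: power2_eq_square)
  have "expectation (\<lambda>x. (\<Sum>j\<in>I. Z j x)\<^sup>2) = (\<Sum>j\<in>I. \<Sum>k\<in>I. expectation (\<lambda>x. Z j x * Z k x))"
    using int_prod by (simp add: power2_eq_square sum_product Bochner_Integration.integral_sum)
  also have "\<dots> = (\<Sum>j\<in>I. expectation (\<lambda>x. (Z j x)\<^sup>2))"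
    using fin cross by (simp add: sum.delta cong: sum.cong)
  finally show ?thesis .
qed

end

section \<open>The multilevel estimator as a sum of independent samples\<close>

locale mlmc_samples = prob_space +
  fixes Xs :: "nat \<Rightarrow> 'a \<Rightarrow> real" and D :: "nat \<Rightarrow> nat \<Rightarrow> 'a \<Rightarrow> real"
  assumes Xs_measurable[measurable]: "\<And>l. Xs l \<in> borel_measurable M"
    and Xs_square_integrable: "\<And>l. integrable M (\<lambda>\<omega>. (Xs l \<omega>)\<^sup>2)"
    and D_measurable[measurable]: "\<And>l i. D l i \<in> borel_measurable M"
    and D_indep: "indep_vars (\<lambda>_. borel) (\<lambda>p. D (fst p) (snd p)) (UNIV \<times> {1..})"
    and D_distr: "\<And>l i. i \<ge> 1 \<Longrightarrow> distr M borel (D l i) = distr M borel (dX Xs l)"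
begin

definition level_mean :: "nat \<Rightarrow> real" where
  "level_mean l = expectation (dX Xs l)"

definition level_var :: "nat \<Rightarrow> real" where
  "level_var l = expectation (\<lambda>\<omega>. (dX Xs l \<omega> - level_mean l)\<^sup>2)"

definition level_tail :: "nat \<Rightarrow> real \<Rightarrow> real" where
  "level_tail l = sq_tail (\<lambda>\<omega>. dX Xs l \<omega> - level_mean l)"

definition ml_estimate :: "nat \<Rightarrow> (nat \<Rightarrow> nat) \<Rightarrow> 'a \<Rightarrow> real" where
  "ml_estimate L N \<omega> = (\<Sum>l\<le>L. (1 / real (N l)) * (\<Sum>i=1..N l. D l i \<omega>))"

definition sample_index :: "nat \<Rightarrow> (nat \<Rightarrow> nat) \<Rightarrow> (nat \<times> nat) set" where
  "sample_index L N = (SIGMA l:{..L}. {1..N l})"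

lemma mlmc_A_eq_ml_estimate:
  "mlmc_A V C c\<alpha> \<alpha> D \<epsilon> = ml_estimate (mlmc_L c\<alpha> \<alpha> \<epsilon>) (mlmc_M V C c\<alpha> \<alpha> \<epsilon>)"
  unfolding mlmc_A_def ml_estimate_def ..

lemma dX_measurable[measurable]: "dX Xs l \<in> borel_measurable M"
  by (cases "l = 0") (auto simp: dX_def[abs_def])

lemma dX_square_integrable: "integrable M (\<lambda>\<omega>. (dX Xs l \<omega>)\<^sup>2)"
proof (rule Bochner_Integration.integrable_bound)
  show "integrable M (\<lambda>\<omega>. 2 * (Xs l \<omega>)\<^sup>2 + 2 * (if l = 0 then 0 else Xs (l - 1) \<omega>)\<^sup>2)"
    using Xs_square_integrable by (cases "l = 0") auto
  have "(a - b)\<^sup>2 \<le> 2 * a\<^sup>2 + 2 * b\<^sup>2" for a b :: real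
    using zero_le_power2[of "a + b"] unfolding power2_diff power2_sum by linarith
  then show "AE \<omega> in M. norm ((dX Xs l \<omega>)\<^sup>2)
      \<le> norm (2 * (Xs l \<omega>)\<^sup>2 + 2 * (if l = 0 then 0 else Xs (l - 1) \<omega>)\<^sup>2)"
    unfolding dX_def by (intro AE_I2) simp
qed auto

lemma dX_integrable: "integrable M (dX Xs l)"
  by (rule square_integrable_imp_integrable[OF dX_measurable dX_square_integrable])

lemma centred_dX_square_integrable: "integrable M (\<lambda>\<omega>. (dX Xs l \<omega> - c)\<^sup>2)"
  unfolding power2_diff using dX_square_integrable dX_integrable by auto

lemma level_var_nonneg: "level_var l \<ge> 0"
  unfolding level_var_def by simp

lemma level_tail_nonneg: "level_tail l c \<ge> 0"
  unfolding level_tail_def by (rule sq_tail_nonneg)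

lemma level_tail_le_level_var: "level_tail l c \<le> level_var l"
  unfolding level_tail_def level_var_def
  by (rule sq_tail_le) (auto intro: centred_dX_square_integrable)

lemma level_tail_antimono: "c \<le> c' \<Longrightarrow> level_tail l c' \<le> level_tail l c"
  unfolding level_tail_def
  by (rule sq_tail_antimono) (auto intro: centred_dX_square_integrable)

lemma level_tail_tendsto_0: "(level_tail l \<longlongrightarrow> 0) at_top"
  unfolding level_tail_def
  by (rule sq_tail_tendsto_0) (auto intro: centred_dX_square_integrable)

lemma lindeberg_cond_tendsto:
  assumes "lindeberg_cond M Xs level_var C \<alpha> \<gamma>" "\<nu> > 0"
  shows "(\<lambda>l. if level_var l > 0 then level_tail l (level_var l *
      (\<nu> * (mlmc_S level_var C l)\<^sup>2 * exp ((2 * \<alpha> - \<gamma>) * real l))) / level_var l else 0) \<longlonglongrightarrow> 0"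
proof -
  have "level_tail l (level_var l * \<tau>) / level_var l =
      expectation (\<lambda>\<omega>. ((dX Xs l \<omega> - level_mean l)\<^sup>2 / level_var l) *
        indicator {\<omega>. (dX Xs l \<omega> - level_mean l)\<^sup>2 / level_var l > \<tau>} \<omega>)"
    if "level_var l > 0" for l \<tau>
    using that unfolding level_tail_def sq_tail_def
    by (simp add: field_simps indicator_def cong: if_cong)
  then show ?thesis
    using assms unfolding lindeberg_cond_def level_mean_def by (simp cong: if_cong)
qed

lemma sum_level_mean: "(\<Sum>l\<le>k. level_mean l) = expectation (Xs k)"
proof (induction k)
  case 0
  have "dX Xs 0 = Xs 0" by (rule ext) (simp add: dX_def)
  then show ?case by (simp add: level_mean_def)
next
  case (Suc k)
  have "dX Xs (Suc k) = (\<lambda>\<omega>. Xs (Suc k) \<omega> - Xs k \<omega>)" by (rule ext) (simp add: dX_def)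
  then have "level_mean (Suc k) = expectation (Xs (Suc k)) - expectation (Xs k)"
    unfolding level_mean_def
    using square_integrable_imp_integrable[OF Xs_measurable Xs_square_integrable] by simp
  then show ?case using Suc by simp
qed

context
  fixes l i :: nat
  assumes i: "i \<ge> 1"
begin

lemmas same_distr_D_dX = same_distr_integral[OF D_measurable dX_measurable _ D_distr[OF i]]

lemma
  shows integrable_D: "integrable M (D l i)"
    and expectation_D: "expectation (D l i) = level_mean l"
  using same_distr_D_dX[of "\<lambda>v. v"] dX_integrable unfolding level_mean_def by simp_all

lemma
  shows centred_D_square_integrable: "integrable M (\<lambda>\<omega>. (D l i \<omega> - level_mean l)\<^sup>2)"
    and expectation_centred_D_square: "expectation (\<lambda>\<omega>. (D l i \<omega> - level_mean l)\<^sup>2) = level_var l"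
  using same_distr_D_dX[of "\<lambda>v. (v - level_mean l)\<^sup>2"] centred_dX_square_integrable
  unfolding level_var_def by simp_all

lemma sq_tail_centred_D: "sq_tail (\<lambda>\<omega>. D l i \<omega> - level_mean l) c = level_tail l c"
proof -
  define g where "g v = (v - level_mean l)\<^sup>2 * indicator {v. c < (v - level_mean l)\<^sup>2} v" for v
  have "expectation (\<lambda>\<omega>. g (D l i \<omega>)) = expectation (\<lambda>\<omega>. g (dX Xs l \<omega>))"
    by (rule same_distr_D_dX) (simp add: g_def)
  then show ?thesis
    unfolding level_tail_def sq_tail_def g_def by (simp add: indicator_def)
qed

end

lemma ml_estimate_centred:
  assumes N: "\<And>l. N l > 0"
  shows "ml_estimate L N \<omega> - expectation (Xs L)
    = (\<Sum>p\<in>sample_index L N. (D (fst p) (snd p) \<omega> - level_mean (fst p)) / real (N (fst p)))"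
proof -
  have "(\<Sum>p\<in>sample_index L N. (D (fst p) (snd p) \<omega> - level_mean (fst p)) / real (N (fst p)))
      = (\<Sum>l\<le>L. \<Sum>i=1..N l. (D l i \<omega> - level_mean l) / real (N l))"
    unfolding sample_index_def by (subst sum.Sigma) (auto simp: case_prod_beta)
  also have "\<dots> = (\<Sum>l\<le>L. (1 / real (N l)) * (\<Sum>i=1..N l. D l i \<omega>) - level_mean l)"
  proof (rule sum.cong)
    fix l
    have "(\<Sum>i=1..N l. (D l i \<omega> - level_mean l) / real (N l))
        = (\<Sum>i=1..N l. D l i \<omega>) / real (N l) - (\<Sum>i=1..N l. level_mean l) / real (N l)"
      by (simp only: sum_subtractf diff_divide_distrib sum_divide_distrib)
    also have "(\<Sum>i=1..N l. level_mean l) / real (N l) = level_mean l" using N[of l] by simp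
    finally show "(\<Sum>i=1..N l. (D l i \<omega> - level_mean l) / real (N l))
        = (1 / real (N l)) * (\<Sum>i=1..N l. D l i \<omega>) - level_mean l" by simp
  qed simp
  also have "\<dots> = ml_estimate L N \<omega> - expectation (Xs L)"
    unfolding ml_estimate_def sum_level_mean[symmetric] sum_subtractf ..
  finally show ?thesis by simp
qed

definition scaled_sample :: "(nat \<Rightarrow> real) \<Rightarrow> nat \<times> nat \<Rightarrow> 'a \<Rightarrow> real" where
  "scaled_sample s p \<omega> = (D (fst p) (snd p) \<omega> - level_mean (fst p)) / s (fst p)"

lemma finite_sample_index[simp]: "finite (sample_index L N)"
  unfolding sample_index_def by simp

lemma sample_index_snd_ge_1: "p \<in> sample_index L N \<Longrightarrow> snd p \<ge> 1"
  unfolding sample_index_def by auto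

lemma sum_sample_index:
  "(\<Sum>p\<in>sample_index L N. g p) = (\<Sum>l\<le>L. \<Sum>i=1..N l. g (l, i))"
  unfolding sample_index_def by (subst sum.Sigma) auto

lemma indep_scaled_sample: "indep_vars (\<lambda>_. borel) (scaled_sample s) (sample_index L N)"
proof -
  have "indep_vars (\<lambda>_. borel)
      (\<lambda>p \<omega>. (\<lambda>v. (v - level_mean (fst p)) / s (fst p)) (D (fst p) (snd p) \<omega>)) (sample_index L N)"
    by (rule indep_vars_compose2[OF indep_vars_subset[OF D_indep]]) (auto simp: sample_index_def)
  then show ?thesis unfolding scaled_sample_def[abs_def] by simp
qed

context
  fixes s :: "nat \<Rightarrow> real" and p :: "nat \<times> nat"
  assumes s_pos: "s (fst p) > 0" and p: "snd p \<ge> 1"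
begin

lemma scaled_sample_square:
  shows "integrable M (\<lambda>\<omega>. (scaled_sample s p \<omega>)\<^sup>2)"
    and "expectation (\<lambda>\<omega>. (scaled_sample s p \<omega>)\<^sup>2) = level_var (fst p) / (s (fst p))\<^sup>2"
  unfolding scaled_sample_def power_divide
  using centred_D_square_integrable[OF p] expectation_centred_D_square[OF p] by simp_all

lemma integrable_scaled_sample: "integrable M (scaled_sample s p)"
  unfolding scaled_sample_def using integrable_D[OF p] by simp

lemma expectation_scaled_sample: "expectation (scaled_sample s p) = 0"
  unfolding scaled_sample_def using integrable_D[OF p] expectation_D[OF p] by (simp add: prob_space)

lemma scaled_sample_tail:
  assumes "\<eta> \<ge> 0"
  shows "expectation (\<lambda>\<omega>. (scaled_sample s p \<omega>)\<^sup>2 * indicator {\<omega>. \<eta> < \<bar>scaled_sample s p \<omega>\<bar>} \<omega>)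
    = level_tail (fst p) (\<eta>\<^sup>2 * (s (fst p))\<^sup>2) / (s (fst p))\<^sup>2"
  unfolding scaled_sample_def sq_tail_scaled[OF assms s_pos] sq_tail_centred_D[OF p] ..

end

context
  fixes L :: nat and N :: "nat \<Rightarrow> nat"
  assumes N_pos: "\<And>l. N l > 0"
begin

lemma ml_estimate_eq_sum_scaled_sample:
  "ml_estimate L N \<omega> = (\<Sum>p\<in>sample_index L N. scaled_sample N p \<omega>) + expectation (Xs L)"
  using ml_estimate_centred[OF N_pos] unfolding scaled_sample_def by (simp add: algebra_simps)

lemma expectation_ml_estimate: "expectation (ml_estimate L N) = expectation (Xs L)"
  unfolding ml_estimate_eq_sum_scaled_sample
  using integrable_scaled_sample expectation_scaled_sample N_pos sample_index_snd_ge_1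
  by (simp add: prob_space)

lemma variance_ml_estimate:
  "expectation (\<lambda>\<omega>. (ml_estimate L N \<omega> - expectation (ml_estimate L N))\<^sup>2)
    = (\<Sum>l\<le>L. level_var l / real (N l))"
proof -
  have "expectation (\<lambda>\<omega>. (ml_estimate L N \<omega> - expectation (ml_estimate L N))\<^sup>2)
      = expectation (\<lambda>\<omega>. (\<Sum>p\<in>sample_index L N. scaled_sample N p \<omega>)\<^sup>2)"
    unfolding expectation_ml_estimate ml_estimate_eq_sum_scaled_sample by simp
  also have "\<dots> = (\<Sum>p\<in>sample_index L N. expectation (\<lambda>\<omega>. (scaled_sample N p \<omega>)\<^sup>2))"
    using N_pos sample_index_snd_ge_1
    by (intro expectation_square_sum_indep indep_scaled_sample scaled_sample_square
        expectation_scaled_sample) auto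
  also have "\<dots> = (\<Sum>l\<le>L. \<Sum>i=1..N l. level_var l / (real (N l))\<^sup>2)"
    unfolding sum_sample_index using N_pos by (intro sum.cong) (auto simp: scaled_sample_square(2))
  also have "\<dots> = (\<Sum>l\<le>L. level_var l / real (N l))"
    using N_pos by (intro sum.cong) (auto simp: power2_eq_square)
  finally show ?thesis .
qed

context
  fixes c :: real
  assumes c_pos: "c > 0"
begin

lemma ml_estimate_normalised:
  "(ml_estimate L N \<omega> - expectation (Xs L)) / c
    = (\<Sum>p\<in>sample_index L N. scaled_sample (\<lambda>l. real (N l) * c) p \<omega>)"
  unfolding ml_estimate_eq_sum_scaled_sample scaled_sample_def
  by (simp add: sum_divide_distrib divide_divide_eq_left)

lemma sum_scaled_sample_square:
  "(\<Sum>p\<in>sample_index L N. expectation (\<lambda>\<omega>. (scaled_sample (\<lambda>l. real (N l) * c) p \<omega>)\<^sup>2))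
    = (\<Sum>l\<le>L. level_var l / real (N l)) / c\<^sup>2"
proof -
  have "(\<Sum>p\<in>sample_index L N. expectation (\<lambda>\<omega>. (scaled_sample (\<lambda>l. real (N l) * c) p \<omega>)\<^sup>2))
      = (\<Sum>l\<le>L. \<Sum>i=1..N l. level_var l / (real (N l) * c)\<^sup>2)"
    unfolding sum_sample_index using N_pos c_pos by (intro sum.cong) (auto simp: scaled_sample_square(2))
  also have "\<dots> = (\<Sum>l\<le>L. level_var l / real (N l)) / c\<^sup>2"
    unfolding sum_divide_distrib using N_pos
    by (intro sum.cong) (auto simp: power_mult_distrib power2_eq_square[of "real _"] gr_implies_not0)
  finally show ?thesis .
qed

lemma sum_scaled_sample_tail:
  assumes "\<eta> \<ge> 0"
  shows "(\<Sum>p\<in>sample_index L N. expectation (\<lambda>\<omega>. (scaled_sample (\<lambda>l. real (N l) * c) p \<omega>)\<^sup>2 *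
      indicator {\<omega>. \<eta> < \<bar>scaled_sample (\<lambda>l. real (N l) * c) p \<omega>\<bar>} \<omega>))
    = (\<Sum>l\<le>L. level_tail l (\<eta>\<^sup>2 * (real (N l))\<^sup>2 * c\<^sup>2) / real (N l)) / c\<^sup>2"
proof -
  have "(\<Sum>p\<in>sample_index L N. expectation (\<lambda>\<omega>. (scaled_sample (\<lambda>l. real (N l) * c) p \<omega>)\<^sup>2 *
        indicator {\<omega>. \<eta> < \<bar>scaled_sample (\<lambda>l. real (N l) * c) p \<omega>\<bar>} \<omega>))
      = (\<Sum>l\<le>L. \<Sum>i=1..N l. level_tail l (\<eta>\<^sup>2 * (real (N l) * c)\<^sup>2) / (real (N l) * c)\<^sup>2)"
    unfolding sum_sample_index using N_pos c_pos assms
    by (intro sum.cong) (auto simp: scaled_sample_tail)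
  also have "\<dots> = (\<Sum>l\<le>L. level_tail l (\<eta>\<^sup>2 * (real (N l))\<^sup>2 * c\<^sup>2) / real (N l)) / c\<^sup>2"
    unfolding sum_divide_distrib using N_pos
    by (intro sum.cong) (auto simp: power_mult_distrib power2_eq_square[of "real _"] gr_implies_not0 mult.assoc)
  finally show ?thesis .
qed

end

end

theorem ml_estimate_clt:
  fixes L :: "nat \<Rightarrow> nat" and N :: "nat \<Rightarrow> nat \<Rightarrow> nat"
  defines "\<sigma>2 \<equiv> \<lambda>n. \<Sum>l\<le>L n. level_var l / real (N n l)"
  assumes N_pos: "\<And>n l. N n l > 0" and \<sigma>2_pos: "\<And>n. \<sigma>2 n > 0"
    and lindeberg: "\<And>\<eta>. \<eta> > 0 \<Longrightarrow>
      (\<lambda>n. \<Sum>l\<le>L n. level_tail l (\<eta>\<^sup>2 * (real (N n l))\<^sup>2 * \<sigma>2 n) / (real (N n l) * \<sigma>2 n)) \<longlonglongrightarrow> 0"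
  shows "weak_conv_m (\<lambda>n. distr M borel (\<lambda>\<omega>.
      (ml_estimate (L n) (N n) \<omega> - expectation (Xs (L n))) /
      sqrt (expectation (\<lambda>\<omega>'. (ml_estimate (L n) (N n) \<omega>' - expectation (ml_estimate (L n) (N n)))\<^sup>2))))
    std_normal_distribution"
proof -
  define Y where "Y n = scaled_sample (\<lambda>l. real (N n l) * sqrt (\<sigma>2 n))" for n
  have sqrt_\<sigma>2: "sqrt (\<sigma>2 n) > 0" "(sqrt (\<sigma>2 n))\<^sup>2 = \<sigma>2 n" for n
    using \<sigma>2_pos[of n] by simp_all
  have "weak_conv_m (\<lambda>n. distr M borel (\<lambda>\<omega>. \<Sum>p\<in>sample_index (L n) (N n). Y n p \<omega>)) std_normal_distribution"
  proof (rule lindeberg_clt)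
    show "(\<Sum>p\<in>sample_index (L n) (N n). expectation (\<lambda>\<omega>. (Y n p \<omega>)\<^sup>2)) = 1" for n
      unfolding Y_def sum_scaled_sample_square[OF N_pos sqrt_\<sigma>2(1)] sqrt_\<sigma>2(2)
      using \<sigma>2_pos[of n] by (simp add: \<sigma>2_def)
    show "(\<lambda>n. \<Sum>p\<in>sample_index (L n) (N n).
        expectation (\<lambda>\<omega>. (Y n p \<omega>)\<^sup>2 * indicator {\<omega>. \<eta> < \<bar>Y n p \<omega>\<bar>} \<omega>)) \<longlonglongrightarrow> 0"
      if "\<eta> > 0" for \<eta>
      unfolding Y_def sum_scaled_sample_tail[OF N_pos sqrt_\<sigma>2(1) less_imp_le[OF that]] sqrt_\<sigma>2(2)
      using lindeberg[OF that] by (simp add: sum_divide_distrib mult.commute)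
  qed (use N_pos sqrt_\<sigma>2 sample_index_snd_ge_1 in \<open>auto simp: Y_def indep_scaled_sample
      scaled_sample_square(1) expectation_scaled_sample\<close>)
  moreover have "sqrt (expectation (\<lambda>\<omega>'. (ml_estimate (L n) (N n) \<omega>'
      - expectation (ml_estimate (L n) (N n)))\<^sup>2)) = sqrt (\<sigma>2 n)" for n
    unfolding variance_ml_estimate[OF N_pos] \<sigma>2_def ..
  ultimately show ?thesis
    unfolding Y_def by (simp add: ml_estimate_normalised[OF N_pos sqrt_\<sigma>2(1)])
qed

end

section \<open>Sample sizes and variance of the MLMC estimator\<close>

lemma nat_ceiling_max_1_bounds:
  fixes a :: real assumes "a \<ge> 0"
  shows "1 \<le> nat (max \<lceil>a\<rceil> 1)" "a \<le> real (nat (max \<lceil>a\<rceil> 1))" "real (nat (max \<lceil>a\<rceil> 1)) \<le> a + 1"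
proof -
  show "1 \<le> nat (max \<lceil>a\<rceil> 1)" by simp
  show "a \<le> real (nat (max \<lceil>a\<rceil> 1))"
    by (smt (verit, ccfv_SIG) le_of_int_ceiling max.cobounded1 of_int_le_iff of_nat_nat)
  show "real (nat (max \<lceil>a\<rceil> 1)) \<le> a + 1"
    using assms by (smt (verit) ceiling_correct max_def nat_1 of_int_1 of_nat_1 of_nat_nat ceiling_less_cancel)
qed

lemma sum_power_tail_le:
  fixes q :: real assumes "0 \<le> q" "q < 1"
  shows "(\<Sum>l=m..n. q^l) \<le> q^m / (1 - q)"
proof -
  have "(\<Sum>l=m..n. q^l) = (if n < m then 0 else (q^m - q^Suc n) / (1 - q))"
    using assms by (simp add: sum_gp)
  also have "\<dots> \<le> q^m / (1 - q)" using assms by (auto simp: divide_right_mono)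
  finally show ?thesis .
qed

lemma sum_exp_mult_le:
  fixes g :: real assumes "g > 0"
  shows "(\<Sum>l\<le>L. exp (g * real l)) \<le> exp (g * real L) / (1 - exp (- g))"
proof -
  have x: "exp g > 1" using assms by simp
  have "(\<Sum>l\<le>L. exp (g * real l)) = (\<Sum>l<Suc L. exp g ^ l)"
    by (intro sum.cong) (auto simp: exp_of_nat_mult[symmetric] mult.commute)
  also have "\<dots> = (exp g ^ Suc L - 1) / (exp g - 1)"
    using x by (intro geometric_sum) auto
  also have "\<dots> \<le> exp g ^ Suc L / (exp g - 1)"
    using x by (intro divide_right_mono) auto
  also have "\<dots> = exp (g * real L) / (1 - exp (- g))"
    using x by (simp add: exp_of_nat_mult[symmetric] exp_minus field_simps exp_add[symmetric] distrib_left)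
  finally show ?thesis .
qed

locale mlmc_tolerances =
  fixes V C :: "nat \<Rightarrow> real" and \<alpha> \<beta> \<gamma> c\<alpha> K C' :: real and \<epsilon>s :: "nat \<Rightarrow> real"
  assumes \<alpha>_pos: "\<alpha> > 0" and \<gamma>_pos: "\<gamma> > 0" and c\<alpha>_pos: "c\<alpha> > 0"
    and V_nonneg: "\<And>l. V l \<ge> 0" and V_le: "\<And>l. V l \<le> K * exp (- \<beta> * real l)"
    and V0_pos: "V 0 > 0"
    and C_pos: "\<And>l. C l > 0" and C_le: "\<And>l. C l \<le> C' * exp (\<gamma> * real l)"
    and \<epsilon>s_pos: "\<And>n. \<epsilon>s n > 0" and \<epsilon>s_tendsto: "\<epsilon>s \<longlonglongrightarrow> 0"
begin

definition L :: "nat \<Rightarrow> nat" where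
  "L n = mlmc_L c\<alpha> \<alpha> (\<epsilon>s n)"

definition S :: "nat \<Rightarrow> real" where
  "S n = mlmc_S V C (L n)"

definition N :: "nat \<Rightarrow> nat \<Rightarrow> nat" where
  "N n l = mlmc_M V C c\<alpha> \<alpha> (\<epsilon>s n) l"

definition N_opt :: "nat \<Rightarrow> nat \<Rightarrow> real" where
  "N_opt n l = (1 / (\<epsilon>s n)\<^sup>2) * sqrt (V l / C l) * S n"

definition \<sigma>2 :: "nat \<Rightarrow> real" where
  "\<sigma>2 n = (\<Sum>l\<le>L n. V l / real (N n l))"

lemma mlmc_S_mono: "k \<le> k' \<Longrightarrow> mlmc_S V C k \<le> mlmc_S V C k'"
  unfolding mlmc_S_def by (rule sum_mono2) (use V_nonneg C_pos in \<open>auto intro: mult_nonneg_nonneg less_imp_le\<close>)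

lemma sqrt_VC0_pos: "sqrt (V 0 * C 0) > 0" using V0_pos C_pos[of 0] by simp

lemma mlmc_S_ge_first: "mlmc_S V C k \<ge> sqrt (V 0 * C 0)"
  using mlmc_S_mono[of 0 k] by (simp add: mlmc_S_def)

lemma mlmc_S_pos: "mlmc_S V C k > 0" using mlmc_S_ge_first[of k] sqrt_VC0_pos by linarith

lemma S_pos: "S n > 0" unfolding S_def by (rule mlmc_S_pos)

lemma N_opt_nonneg: "N_opt n l \<ge> 0"
  unfolding N_opt_def using V_nonneg[of l] C_pos[of l] S_pos[of n] by simp

lemma N_eq: "N n l = nat (max \<lceil>N_opt n l\<rceil> 1)"
  unfolding N_def mlmc_M_def N_opt_def S_def L_def ..

lemma N_ge_1: "1 \<le> N n l" and N_opt_le_N: "N_opt n l \<le> real (N n l)" and N_le_N_opt: "real (N n l) \<le> N_opt n l + 1"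
  using nat_ceiling_max_1_bounds[OF N_opt_nonneg[of n l]] unfolding N_eq by auto

lemma N_pos: "real (N n l) > 0" using N_ge_1[of n l] by simp

lemma N_opt_pos: "V l > 0 \<Longrightarrow> N_opt n l > 0"
  unfolding N_opt_def using C_pos[of l] S_pos[of n] \<epsilon>s_pos[of n] by simp

lemma V_div_N_opt: assumes "V l > 0"
  shows "V l / N_opt n l = (\<epsilon>s n)\<^sup>2 * sqrt (V l * C l) / S n"
proof -
  have "V l = sqrt (V l) * sqrt (V l)" using assms by simp
  then show ?thesis unfolding N_opt_def using \<epsilon>s_pos[of n] C_pos[of l] S_pos[of n] assms
    by (simp add: real_sqrt_divide real_sqrt_mult field_simps)
qed

lemma V_div_N_opt_square: assumes "V l > 0"
  shows "V l / (N_opt n l)\<^sup>2 = (\<epsilon>s n)^4 * C l / (S n)\<^sup>2"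
  unfolding N_opt_def using \<epsilon>s_pos[of n] C_pos[of l] S_pos[of n] assms
  by (simp add: real_sqrt_divide field_simps power2_eq_square power4_eq_xxxx)

lemma sum_sqrt_VC: "(\<Sum>l\<le>L n. sqrt (V l * C l)) = S n"
  unfolding S_def mlmc_S_def ..

lemma sigma2_ge_first: "\<sigma>2 n \<ge> V 0 / real (N n 0)"
  unfolding \<sigma>2_def
  by (rule member_le_sum) (use V_nonneg N_pos in \<open>auto intro: divide_nonneg_pos\<close>)

lemma sigma2_pos: "\<sigma>2 n > 0"
  using sigma2_ge_first[of n] V0_pos N_pos[of n 0] by (smt (verit) divide_pos_pos)

lemma L_ge_if_eps_le: assumes "\<epsilon>s n \<le> c\<alpha> * exp (- \<alpha> * real Z)" shows "Z \<le> L n"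
proof -
  have e: "\<epsilon>s n > 0" by (rule \<epsilon>s_pos)
  have "exp (\<alpha> * real Z) \<le> c\<alpha> / \<epsilon>s n"
    using assms e by (simp add: field_simps exp_minus)
  then have "\<alpha> * real Z \<le> ln (c\<alpha> / \<epsilon>s n)"
    using e c\<alpha>_pos by (subst ln_ge_iff) auto
  then have "real Z \<le> ln (c\<alpha> / \<epsilon>s n) / \<alpha>" using \<alpha>_pos by (simp add: field_simps)
  then have "real Z \<le> real_of_int \<lceil>ln (c\<alpha> / \<epsilon>s n) / \<alpha>\<rceil>"
    by (meson le_of_int_ceiling order_trans)
  then show ?thesis unfolding L_def mlmc_L_def by linarith
qed

lemma L_tendsto_at_top: "filterlim L at_top sequentially"
  unfolding filterlim_at_top
proof
  fix Z :: nat
  have "c\<alpha> * exp (- \<alpha> * real Z) > 0" using c\<alpha>_pos by simp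
  then have "\<forall>\<^sub>F n in sequentially. \<epsilon>s n < c\<alpha> * exp (- \<alpha> * real Z)"
    by (rule order_tendstoD(2)[OF \<epsilon>s_tendsto])
  then show "\<forall>\<^sub>F n in sequentially. Z \<le> L n"
    by eventually_elim (rule L_ge_if_eps_le, simp)
qed

lemma eps_less_exp_L: assumes "\<epsilon>s n < c\<alpha>"
  shows "\<epsilon>s n < c\<alpha> * exp \<alpha> * exp (- \<alpha> * real (L n))"
proof -
  have e: "\<epsilon>s n > 0" by (rule \<epsilon>s_pos)
  define x where "x = ln (c\<alpha> / \<epsilon>s n) / \<alpha>"
  have "c\<alpha> / \<epsilon>s n > 1" using assms e by simp
  then have x: "x > 0" unfolding x_def using \<alpha>_pos by simp
  then have "\<lceil>x\<rceil> \<ge> 1" by simp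
  then have "real (L n) = real_of_int \<lceil>x\<rceil>" unfolding L_def mlmc_L_def x_def[symmetric] by simp
  also have "\<dots> < x + 1" by linarith
  finally have "\<alpha> * real (L n) < ln (c\<alpha> / \<epsilon>s n) + \<alpha>" unfolding x_def using \<alpha>_pos by (simp add: field_simps)
  then have "exp (\<alpha> * real (L n)) < exp (ln (c\<alpha> / \<epsilon>s n) + \<alpha>)" by simp
  also have "\<dots> = c\<alpha> / \<epsilon>s n * exp \<alpha>" using e c\<alpha>_pos by (simp add: exp_add)
  finally show ?thesis using e by (simp add: field_simps exp_minus)
qed

lemma eventually_eps_less: "\<forall>\<^sub>F n in sequentially. \<epsilon>s n < r" if "r > 0" for r
  by (rule order_tendstoD(2)[OF \<epsilon>s_tendsto that])

lemma exp_L_le_inverse_eps_square: assumes "\<epsilon>s n < c\<alpha>"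
  shows "exp (2 * \<alpha> * real (L n)) / (c\<alpha>\<^sup>2 * exp (2 * \<alpha>)) \<le> 1 / (\<epsilon>s n)\<^sup>2"
proof -
  have e: "\<epsilon>s n > 0" by (rule \<epsilon>s_pos)
  have "(\<epsilon>s n)\<^sup>2 \<le> (c\<alpha> * exp \<alpha> * exp (- \<alpha> * real (L n)))\<^sup>2"
    using eps_less_exp_L[OF assms] e by (intro power_mono) auto
  also have "\<dots> = c\<alpha>\<^sup>2 * exp (2 * \<alpha>) / exp (2 * \<alpha> * real (L n))"
    by (simp add: power2_eq_square exp_minus field_simps flip: exp_add)
  finally show ?thesis using e c\<alpha>_pos by (simp add: field_simps)
qed

lemma K_pos: "K > 0"
  using V_le[of 0] V0_pos by simp

lemma C'_pos: "C' > 0"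
  using C_pos[of 0] C_le[of 0] by simp

lemma sqrt_VC_le: "sqrt (V l * C l) \<le> sqrt (K * C') * exp (- (\<beta> - \<gamma>) / 2) ^ l"
proof -
  have "V l * C l \<le> (K * exp (- \<beta> * real l)) * (C' * exp (\<gamma> * real l))"
    using V_le[of l] C_le[of l] V_nonneg[of l] C_pos[of l] K_pos
    by (intro mult_mono) auto
  also have "\<dots> = (K * C') * (exp (- (\<beta> - \<gamma>) / 2) ^ l)\<^sup>2"
    by (simp add: exp_of_nat_mult[symmetric] power2_eq_square algebra_simps flip: exp_add)
  finally have "sqrt (V l * C l) \<le> sqrt ((K * C') * (exp (- (\<beta> - \<gamma>) / 2) ^ l)\<^sup>2)"
    by (rule real_sqrt_le_mono)
  also have "\<dots> = sqrt (K * C') * exp (- (\<beta> - \<gamma>) / 2) ^ l"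
    by (simp add: real_sqrt_mult)
  finally show ?thesis .
qed

lemma mlmc_S_le_if_var_dominates:
  assumes "\<beta> > \<gamma>"
  shows "mlmc_S V C k \<le> sqrt (K * C') / (1 - exp (- (\<beta> - \<gamma>) / 2))"
proof -
  define q where "q = exp (- (\<beta> - \<gamma>) / 2)"
  have q: "0 \<le> q" "q < 1" unfolding q_def using assms by auto
  have "mlmc_S V C k \<le> (\<Sum>l=0..k. sqrt (K * C') * q ^ l)"
    unfolding mlmc_S_def q_def atLeast0AtMost by (rule sum_mono) (rule sqrt_VC_le)
  also have "\<dots> = sqrt (K * C') * (\<Sum>l=0..k. q ^ l)" by (simp add: sum_distrib_left)
  also have "\<dots> \<le> sqrt (K * C') * (q ^ 0 / (1 - q))"
    using sum_power_tail_le[OF q, of 0 k] K_pos C'_pos by (intro mult_left_mono) auto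
  finally show ?thesis unfolding q_def by simp
qed

text \<open>When \<open>\<beta> > \<gamma>\<close> the sums \<open>S\<close> stay bounded, so level 0 alone has variance \<open>V 0 / N n 0 \<ge> \<kappa> \<epsilon>\<^sup>2\<close>.\<close>

lemma sigma2_lower_if_var_dominates:
  assumes "\<beta> > \<gamma>"
  shows "\<exists>\<kappa>>0. \<forall>\<^sub>F n in sequentially. \<kappa> * (\<epsilon>s n)\<^sup>2 \<le> \<sigma>2 n"
proof -
  define B where "B = sqrt (K * C') / (1 - exp (- (\<beta> - \<gamma>) / 2))"
  have SB: "S n \<le> B" for n
    unfolding S_def B_def by (rule mlmc_S_le_if_var_dominates[OF assms])
  have B: "B \<ge> 0" using SB[of 0] S_pos[of 0] by simp
  define r where "r = sqrt (V 0 / C 0)"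
  have r: "r \<ge> 0" unfolding r_def using V0_pos C_pos[of 0] by simp
  define \<kappa> where "\<kappa> = V 0 / (r * B + 1)"
  have \<kappa>: "\<kappa> > 0" unfolding \<kappa>_def using V0_pos r B by (simp add: add_nonneg_pos)
  have "\<forall>\<^sub>F n in sequentially. \<epsilon>s n < 1" by (rule eventually_eps_less) simp
  then have "\<forall>\<^sub>F n in sequentially. \<kappa> * (\<epsilon>s n)\<^sup>2 \<le> \<sigma>2 n"
  proof eventually_elim
    case (elim n)
    have \<epsilon>: "\<epsilon>s n > 0" "1 \<le> 1 / (\<epsilon>s n)\<^sup>2"
      using elim \<epsilon>s_pos[of n] by (simp_all add: field_simps power_le_one)
    have "real (N n 0) \<le> r * S n / (\<epsilon>s n)\<^sup>2 + 1"
      using N_le_N_opt[of n 0] unfolding N_opt_def r_def by simp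
    also have "\<dots> \<le> (r * B + 1) / (\<epsilon>s n)\<^sup>2"
      using mult_left_mono[OF SB[of n] r] \<epsilon>
      unfolding add_divide_distrib by (smt (verit) divide_right_mono zero_le_power2)
    finally have N0: "real (N n 0) \<le> (r * B + 1) / (\<epsilon>s n)\<^sup>2" .
    have "\<kappa> * (\<epsilon>s n)\<^sup>2 = V 0 / ((r * B + 1) / (\<epsilon>s n)\<^sup>2)"
      unfolding \<kappa>_def using \<epsilon> by (simp add: field_simps)
    also have "\<dots> \<le> V 0 / real (N n 0)"
      using N0 N_pos[of n 0] V0_pos r B \<epsilon> by (intro divide_left_mono) (auto intro!: divide_pos_pos mult_pos_pos add_nonneg_pos)
    also have "\<dots> \<le> \<sigma>2 n" by (rule sigma2_ge_first)
    finally show ?case .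
  qed
  then show ?thesis using \<kappa> by blast
qed

text \<open>Rounding the optimal sample size \<open>a\<close> up to at most \<open>a + 1\<close> loses at most \<open>V / a\<^sup>2\<close> of
  the variance \<open>V / a\<close> of a level.\<close>

lemma sigma2_ge_eps_square_minus:
  "\<sigma>2 n \<ge> (\<epsilon>s n)\<^sup>2 - (\<epsilon>s n)^4 * (\<Sum>l\<le>L n. C l) / (S n)\<^sup>2"
proof -
  have level: "V l / real (N n l) \<ge> (\<epsilon>s n)\<^sup>2 * sqrt (V l * C l) / S n - (\<epsilon>s n)^4 * C l / (S n)\<^sup>2" for l
  proof (cases "V l > 0")
    case True
    have "V l / N_opt n l - V l / (N_opt n l)\<^sup>2 \<le> V l / (N_opt n l + 1)"
    proof -
      have "1 / N_opt n l - 1 / (N_opt n l)\<^sup>2 \<le> 1 / (N_opt n l + 1)"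
        using N_opt_pos[OF True, of n] by (simp add: field_simps power2_eq_square)
      from mult_left_mono[OF this, of "V l"] True show ?thesis by (simp add: field_simps)
    qed
    also have "\<dots> \<le> V l / real (N n l)"
      using N_le_N_opt[of n l] N_pos[of n l] True by (intro divide_left_mono) auto
    finally show ?thesis using V_div_N_opt[OF True] V_div_N_opt_square[OF True] by simp
  next
    case False then have "V l = 0" using V_nonneg[of l] by simp
    then show ?thesis using C_pos[of l] \<epsilon>s_pos[of n] by simp
  qed
  have "(\<Sum>l\<le>L n. (\<epsilon>s n)\<^sup>2 * sqrt (V l * C l) / S n - (\<epsilon>s n)^4 * C l / (S n)\<^sup>2) \<le> \<sigma>2 n"
    unfolding \<sigma>2_def by (rule sum_mono) (rule level)
  moreover have "(\<Sum>l\<le>L n. (\<epsilon>s n)\<^sup>2 * sqrt (V l * C l) / S n - (\<epsilon>s n)^4 * C l / (S n)\<^sup>2)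
     = (\<epsilon>s n)\<^sup>2 - (\<epsilon>s n)^4 * (\<Sum>l\<le>L n. C l) / (S n)\<^sup>2"
    unfolding sum_subtractf sum_distrib_left[symmetric] sum_divide_distrib[symmetric] sum_sqrt_VC
    using S_pos[of n] by simp
  ultimately show ?thesis by simp
qed

lemma sum_C_le: "(\<Sum>l\<le>k. C l) \<le> C' * exp (\<gamma> * real k) / (1 - exp (- \<gamma>))"
proof -
  have "(\<Sum>l\<le>k. C l) \<le> (\<Sum>l\<le>k. C' * exp (\<gamma> * real l))" by (rule sum_mono) (rule C_le)
  also have "\<dots> = C' * (\<Sum>l\<le>k. exp (\<gamma> * real l))" by (simp add: sum_distrib_left)
  also have "\<dots> \<le> C' * (exp (\<gamma> * real k) / (1 - exp (- \<gamma>)))"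
    using sum_exp_mult_le[OF \<gamma>_pos, of k] C'_pos by (intro mult_left_mono) auto
  finally show ?thesis by simp
qed

lemma eps_square_sum_C_le:
  assumes "\<epsilon>s n < c\<alpha>"
  shows "(\<epsilon>s n)\<^sup>2 * (\<Sum>l\<le>L n. C l)
    \<le> c\<alpha>\<^sup>2 * exp (2 * \<alpha>) * C' / (1 - exp (- \<gamma>)) * exp ((\<gamma> - 2 * \<alpha>) * real (L n))"
proof -
  have "(\<epsilon>s n)\<^sup>2 \<le> c\<alpha>\<^sup>2 * exp (2 * \<alpha>) / exp (2 * \<alpha> * real (L n))"
    using exp_L_le_inverse_eps_square[OF assms] \<epsilon>s_pos[of n] c\<alpha>_pos by (simp add: field_simps)
  moreover have "0 \<le> (\<Sum>l\<le>L n. C l)" using C_pos by (simp add: sum_nonneg less_imp_le)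
  ultimately have "(\<epsilon>s n)\<^sup>2 * (\<Sum>l\<le>L n. C l)
      \<le> (c\<alpha>\<^sup>2 * exp (2 * \<alpha>) / exp (2 * \<alpha> * real (L n))) * (C' * exp (\<gamma> * real (L n)) / (1 - exp (- \<gamma>)))"
    using sum_C_le by (intro mult_mono) auto
  also have "\<dots> = c\<alpha>\<^sup>2 * exp (2 * \<alpha>) * C' / (1 - exp (- \<gamma>)) * exp ((\<gamma> - 2 * \<alpha>) * real (L n))"
    by (simp add: field_simps exp_diff left_diff_distrib)
  finally show ?thesis .
qed

lemma sigma2_lower_if_cost_ratio_vanishes:
  assumes "(\<lambda>k. exp ((\<gamma> - 2 * \<alpha>) * real k) / (mlmc_S V C k)\<^sup>2) \<longlonglongrightarrow> 0"
  shows "\<exists>\<kappa>>0. \<forall>\<^sub>F n in sequentially. \<kappa> * (\<epsilon>s n)\<^sup>2 \<le> \<sigma>2 n"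
proof -
  define Q where "Q = c\<alpha>\<^sup>2 * exp (2 * \<alpha>) * C' / (1 - exp (- \<gamma>))"
  have Q: "Q > 0" unfolding Q_def using c\<alpha>_pos C'_pos \<gamma>_pos by simp
  have "(\<lambda>n. exp ((\<gamma> - 2 * \<alpha>) * real (L n)) / (S n)\<^sup>2) \<longlonglongrightarrow> 0"
    unfolding S_def using filterlim_compose[OF assms L_tendsto_at_top] by (simp add: o_def)
  moreover have "0 < 1 / (2 * Q)" using Q by simp
  ultimately have "\<forall>\<^sub>F n in sequentially. exp ((\<gamma> - 2 * \<alpha>) * real (L n)) / (S n)\<^sup>2 < 1 / (2 * Q)"
    by (rule order_tendstoD(2))
  then have "\<forall>\<^sub>F n in sequentially. 1 / 2 * (\<epsilon>s n)\<^sup>2 \<le> \<sigma>2 n"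
    using eventually_eps_less[OF c\<alpha>_pos]
  proof eventually_elim
    case (elim n)
    have "(\<epsilon>s n)\<^sup>2 * (\<Sum>l\<le>L n. C l) / (S n)\<^sup>2 \<le> Q * (exp ((\<gamma> - 2 * \<alpha>) * real (L n)) / (S n)\<^sup>2)"
      using eps_square_sum_C_le[OF elim(2)] S_pos[of n] unfolding Q_def[symmetric]
      by (simp add: divide_right_mono)
    also have "\<dots> \<le> Q * (1 / (2 * Q))" using elim(1) Q by (intro mult_left_mono) auto
    finally have "(\<epsilon>s n)\<^sup>2 * (\<Sum>l\<le>L n. C l) / (S n)\<^sup>2 \<le> 1 / 2" using Q by simp
    then have "(\<epsilon>s n)\<^sup>2 * ((\<epsilon>s n)\<^sup>2 * (\<Sum>l\<le>L n. C l) / (S n)\<^sup>2) \<le> (\<epsilon>s n)\<^sup>2 * (1 / 2)"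
      by (intro mult_left_mono) auto
    then show ?case
      using sigma2_ge_eps_square_minus[of n] by (simp add: power4_eq_xxxx power2_eq_square)
  qed
  then show ?thesis by (intro exI[of _ "1 / 2"]) auto
qed

lemma cost_ratio_tendsto_0_if_S_unbounded:
  assumes g: "\<gamma> \<le> 2 * \<alpha>" and S: "filterlim (mlmc_S V C) at_top sequentially"
  shows "(\<lambda>k. exp ((\<gamma> - 2 * \<alpha>) * real k) / (mlmc_S V C k)\<^sup>2) \<longlonglongrightarrow> 0"
proof (rule Lim_null_comparison)
  have "filterlim (\<lambda>k. (mlmc_S V C k)\<^sup>2) at_top sequentially"
    by (rule filterlim_pow_at_top) (use S in auto)
  then show "(\<lambda>k. inverse ((mlmc_S V C k)\<^sup>2)) \<longlonglongrightarrow> 0"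
    by (rule tendsto_inverse_0_at_top)
  show "\<forall>\<^sub>F k in sequentially. norm (exp ((\<gamma> - 2 * \<alpha>) * real k) / (mlmc_S V C k)\<^sup>2) \<le> inverse ((mlmc_S V C k)\<^sup>2)"
  proof (intro always_eventually allI)
    fix k
    have "exp ((\<gamma> - 2 * \<alpha>) * real k) \<le> 1" using g by (simp add: mult_nonpos_nonneg)
    then show "norm (exp ((\<gamma> - 2 * \<alpha>) * real k) / (mlmc_S V C k)\<^sup>2) \<le> inverse ((mlmc_S V C k)\<^sup>2)"
      using mlmc_S_pos[of k] by (simp add: divide_inverse)
  qed
qed

lemma cost_ratio_tendsto_0_if_liminf:
  assumes u: "\<upsilon> < 2 * \<alpha>" and li: "liminf (\<lambda>k. ereal (mlmc_S V C k * exp ((\<upsilon> - \<gamma>) * real k / 2))) > 1"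
  shows "(\<lambda>k. exp ((\<gamma> - 2 * \<alpha>) * real k) / (mlmc_S V C k)\<^sup>2) \<longlonglongrightarrow> 0"
proof (rule Lim_null_comparison)
  have "(\<lambda>k. exp (\<upsilon> - 2 * \<alpha>) ^ k) \<longlonglongrightarrow> 0"
    using u by (intro LIMSEQ_power_zero) auto
  then show "(\<lambda>k. exp ((\<upsilon> - 2 * \<alpha>) * real k)) \<longlonglongrightarrow> 0"
    by (simp add: exp_of_nat_mult[symmetric] mult.commute)
  have "\<forall>\<^sub>F k in sequentially. 1 < ereal (mlmc_S V C k * exp ((\<upsilon> - \<gamma>) * real k / 2))"
    using less_LiminfD[OF li] by simp
  then show "\<forall>\<^sub>F k in sequentially. norm (exp ((\<gamma> - 2 * \<alpha>) * real k) / (mlmc_S V C k)\<^sup>2) \<le> exp ((\<upsilon> - 2 * \<alpha>) * real k)"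
  proof eventually_elim
    case (elim k)
    define x where "x = mlmc_S V C k * exp ((\<upsilon> - \<gamma>) * real k / 2)"
    have x1: "1 < x" using elim unfolding x_def by simp
    have sp: "mlmc_S V C k > 0" by (rule mlmc_S_pos)
    have "x\<^sup>2 = (mlmc_S V C k)\<^sup>2 * exp ((\<upsilon> - \<gamma>) * real k)"
      unfolding x_def by (simp add: power2_eq_square field_simps flip: exp_add)
    moreover have "1 \<le> x\<^sup>2" using x1 by (simp add: one_le_power)
    ultimately have "1 \<le> (mlmc_S V C k)\<^sup>2 * exp ((\<upsilon> - \<gamma>) * real k)" by simp
    then have "exp ((\<gamma> - 2 * \<alpha>) * real k) \<le> exp ((\<gamma> - 2 * \<alpha>) * real k) * ((mlmc_S V C k)\<^sup>2 * exp ((\<upsilon> - \<gamma>) * real k))"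
      by simp
    also have "\<dots> = (mlmc_S V C k)\<^sup>2 * exp ((\<upsilon> - 2 * \<alpha>) * real k)"
      by (simp add: algebra_simps flip: exp_add)
    finally have "exp ((\<gamma> - 2 * \<alpha>) * real k) / (mlmc_S V C k)\<^sup>2 \<le> exp ((\<upsilon> - 2 * \<alpha>) * real k)"
      using sp by (simp add: divide_le_eq mult.commute)
    then show ?case by simp
  qed
qed

lemma N_opt_mult_eps_square: "N_opt n l * (\<epsilon>s n)\<^sup>2 = sqrt (V l / C l) * S n"
  unfolding N_opt_def using \<epsilon>s_pos[of n] by simp

lemma N_opt_square_mult_eps_square: "(N_opt n l)\<^sup>2 * (\<epsilon>s n)\<^sup>2 = (V l / C l) * (S n)\<^sup>2 / (\<epsilon>s n)\<^sup>2"
  unfolding N_opt_def using \<epsilon>s_pos[of n] V_nonneg[of l] C_pos[of l]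
  by (simp add: power2_eq_square field_simps)

lemma threshold_le_N_square_sigma2:
  assumes "\<kappa> > 0" "\<kappa> * (\<epsilon>s n)\<^sup>2 \<le> \<sigma>2 n"
  shows "\<eta>\<^sup>2 * \<kappa> * (V l / C l) * (S n)\<^sup>2 / (\<epsilon>s n)\<^sup>2 \<le> \<eta>\<^sup>2 * (real (N n l))\<^sup>2 * \<sigma>2 n"
proof -
  have "(N_opt n l)\<^sup>2 \<le> (real (N n l))\<^sup>2" using N_opt_le_N[of n l] N_opt_nonneg[of n l] by (intro power_mono) auto
  then have "(N_opt n l)\<^sup>2 * (\<kappa> * (\<epsilon>s n)\<^sup>2) \<le> (real (N n l))\<^sup>2 * \<sigma>2 n"
    using assms by (intro mult_mono) auto
  then have "\<eta>\<^sup>2 * ((N_opt n l)\<^sup>2 * (\<kappa> * (\<epsilon>s n)\<^sup>2)) \<le> \<eta>\<^sup>2 * ((real (N n l))\<^sup>2 * \<sigma>2 n)"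
    by (intro mult_left_mono) auto
  moreover have "\<eta>\<^sup>2 * \<kappa> * (V l / C l) * (S n)\<^sup>2 / (\<epsilon>s n)\<^sup>2 = \<eta>\<^sup>2 * ((N_opt n l)\<^sup>2 * (\<kappa> * (\<epsilon>s n)\<^sup>2))"
  proof -
    have "\<eta>\<^sup>2 * \<kappa> * (V l / C l) * (S n)\<^sup>2 / (\<epsilon>s n)\<^sup>2 = \<eta>\<^sup>2 * \<kappa> * ((V l / C l) * (S n)\<^sup>2 / (\<epsilon>s n)\<^sup>2)" by simp
    also have "\<dots> = \<eta>\<^sup>2 * \<kappa> * ((N_opt n l)\<^sup>2 * (\<epsilon>s n)\<^sup>2)" using N_opt_square_mult_eps_square[of n l] by simp
    finally show ?thesis by (simp add: algebra_simps)
  qed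
  ultimately show ?thesis by simp
qed

lemma N_sqrt_ratio_le_N_sigma2:
  assumes "\<kappa> > 0" "\<kappa> * (\<epsilon>s n)\<^sup>2 \<le> \<sigma>2 n"
  shows "\<kappa> * sqrt (V l / C l) * S n \<le> real (N n l) * \<sigma>2 n"
proof -
  have "N_opt n l * (\<kappa> * (\<epsilon>s n)\<^sup>2) \<le> real (N n l) * \<sigma>2 n"
    using assms N_opt_le_N[of n l] N_opt_nonneg[of n l] by (intro mult_mono) auto
  then show ?thesis using N_opt_mult_eps_square[of n l] by (simp add: algebra_simps)
qed

text \<open>This is where the choice of \<open>L\<close> enters: \<open>\<epsilon> \<le> c\<alpha> e\<^sup>\<alpha> e\<^sup>-\<^sup>\<alpha>\<^sup>L\<close>, so up to level \<open>L\<close> the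
  threshold of condition (*) is below the truncation level of the normalised samples.\<close>

lemma lindeberg_threshold_le:
  assumes l: "l \<le> L n" and \<epsilon>: "\<epsilon>s n < c\<alpha>" and \<kappa>: "\<kappa> > 0" "\<kappa> * (\<epsilon>s n)\<^sup>2 \<le> \<sigma>2 n"
  shows "V l * (\<eta>\<^sup>2 * \<kappa> / (c\<alpha>\<^sup>2 * exp (2 * \<alpha>) * C') * (mlmc_S V C l)\<^sup>2 * exp ((2 * \<alpha> - \<gamma>) * real l))
    \<le> \<eta>\<^sup>2 * (real (N n l))\<^sup>2 * \<sigma>2 n"
proof -
  have exp_le: "exp (2 * \<alpha> * real l) / (c\<alpha>\<^sup>2 * exp (2 * \<alpha>)) \<le> 1 / (\<epsilon>s n)\<^sup>2"
  proof -
    have "exp (2 * \<alpha> * real l) \<le> exp (2 * \<alpha> * real (L n))"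
      using l \<alpha>_pos by simp
    then show ?thesis
      using exp_L_le_inverse_eps_square[OF \<epsilon>] c\<alpha>_pos
      by (smt (verit) divide_right_mono exp_gt_zero mult_pos_pos zero_less_power)
  qed
  have C_inv: "1 / (C' * exp (\<gamma> * real l)) \<le> 1 / C l"
    using C_le[of l] C_pos[of l] by (intro divide_left_mono) auto
  have S_le: "(mlmc_S V C l)\<^sup>2 \<le> (S n)\<^sup>2"
    using mlmc_S_pos[of l] mlmc_S_mono[OF l] unfolding S_def by (intro power_mono) auto
  have "V l * (\<eta>\<^sup>2 * \<kappa> / (c\<alpha>\<^sup>2 * exp (2 * \<alpha>) * C') * (mlmc_S V C l)\<^sup>2 * exp ((2 * \<alpha> - \<gamma>) * real l))
      = \<eta>\<^sup>2 * \<kappa> * V l * (mlmc_S V C l)\<^sup>2 *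
        (exp (2 * \<alpha> * real l) / (c\<alpha>\<^sup>2 * exp (2 * \<alpha>))) * (1 / (C' * exp (\<gamma> * real l)))"
    using c\<alpha>_pos C'_pos by (simp add: field_simps left_diff_distrib exp_diff)
  also have "\<dots> \<le> \<eta>\<^sup>2 * \<kappa> * V l * (S n)\<^sup>2 * (1 / (\<epsilon>s n)\<^sup>2) * (1 / C l)"
    using exp_le C_inv S_le V_nonneg[of l] \<kappa> C'_pos by (intro mult_mono mult_left_mono) auto
  also have "\<dots> = \<eta>\<^sup>2 * \<kappa> * (V l / C l) * (S n)\<^sup>2 / (\<epsilon>s n)\<^sup>2" by simp
  also have "\<dots> \<le> \<eta>\<^sup>2 * (real (N n l))\<^sup>2 * \<sigma>2 n" by (rule threshold_le_N_square_sigma2[OF \<kappa>])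
  finally show ?thesis .
qed

end

section \<open>Lindeberg's condition for the MLMC estimator\<close>

text \<open>\<open>G\<close> abstracts the truncated second moments \<open>level_tail\<close> of the centred level differences.\<close>

locale mlmc_tails = mlmc_tolerances +
  fixes G :: "nat \<Rightarrow> real \<Rightarrow> real"
  assumes G_nonneg: "\<And>l c. G l c \<ge> 0" and G_le_V: "\<And>l c. G l c \<le> V l"
    and G_antimono: "\<And>l c c'. c \<le> c' \<Longrightarrow> G l c' \<le> G l c"
    and G_tendsto_0: "\<And>l. (G l \<longlongrightarrow> 0) at_top"
begin

text \<open>Level \<open>l\<close>'s share of the Lindeberg sum of the normalised estimator: \<open>N n l\<close> samples,
  each divided by \<open>N n l * sqrt (\<sigma>2 n)\<close>.\<close>
definition lind_term :: "real \<Rightarrow> nat \<Rightarrow> nat \<Rightarrow> real" where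
  "lind_term \<eta> n l = G l (\<eta>\<^sup>2 * (real (N n l))\<^sup>2 * \<sigma>2 n) / (real (N n l) * \<sigma>2 n)"

definition lindeberg_ratio :: "real \<Rightarrow> nat \<Rightarrow> real" where
  "lindeberg_ratio \<nu> l = (if V l > 0
     then G l (V l * (\<nu> * (mlmc_S V C l)\<^sup>2 * exp ((2 * \<alpha> - \<gamma>) * real l))) / V l else 0)"

lemma lind_term_nonneg:
  shows "lind_term \<eta> n l \<ge> 0"
  unfolding lind_term_def using G_nonneg N_pos[of n l] sigma2_pos[of n] by simp

lemma lind_term_eq_0:
  assumes "\<not> V l > 0"
  shows "lind_term \<eta> n l = 0"
proof -
  have "V l = 0" using assms V_nonneg[of l] by simp
  then have "G l c = 0" for c using G_nonneg[of l c] G_le_V[of l c] by simp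
  then show ?thesis unfolding lind_term_def by simp
qed

lemma lind_term_le_fixed_level:
  assumes V: "V l > 0" and \<kappa>: "\<kappa> > 0" "\<kappa> * (\<epsilon>s n)\<^sup>2 \<le> \<sigma>2 n"
  shows "lind_term \<eta> n l \<le> G l (\<eta>\<^sup>2 * \<kappa> * (V l / C l) * (sqrt (V 0 * C 0))\<^sup>2 / (\<epsilon>s n)\<^sup>2)
            / (\<kappa> * sqrt (V l / C l) * sqrt (V 0 * C 0))"
proof -
  define s0 where "s0 = sqrt (V 0 * C 0)"
  have s0: "s0 > 0" "s0 \<le> S n" unfolding s0_def S_def using sqrt_VC0_pos mlmc_S_ge_first by auto
  have VC: "V l / C l > 0" using V C_pos[of l] by simp
  have "0 \<le> \<eta>\<^sup>2 * \<kappa> * (V l / C l)" using \<kappa> VC by (intro mult_nonneg_nonneg) auto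
  then have "\<eta>\<^sup>2 * \<kappa> * (V l / C l) * s0\<^sup>2 / (\<epsilon>s n)\<^sup>2 \<le> \<eta>\<^sup>2 * \<kappa> * (V l / C l) * (S n)\<^sup>2 / (\<epsilon>s n)\<^sup>2"
    using s0 by (intro divide_right_mono mult_left_mono power_mono) auto
  also have "\<dots> \<le> \<eta>\<^sup>2 * (real (N n l))\<^sup>2 * \<sigma>2 n" by (rule threshold_le_N_square_sigma2[OF \<kappa>])
  finally have G_le: "G l (\<eta>\<^sup>2 * (real (N n l))\<^sup>2 * \<sigma>2 n) \<le> G l (\<eta>\<^sup>2 * \<kappa> * (V l / C l) * s0\<^sup>2 / (\<epsilon>s n)\<^sup>2)"
    by (rule G_antimono)
  have "\<kappa> * sqrt (V l / C l) * s0 \<le> \<kappa> * sqrt (V l / C l) * S n"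
    using s0 \<kappa> VC by (intro mult_left_mono) auto
  also have "\<dots> \<le> real (N n l) * \<sigma>2 n" by (rule N_sqrt_ratio_le_N_sigma2[OF \<kappa>])
  finally have denom_le: "\<kappa> * sqrt (V l / C l) * s0 \<le> real (N n l) * \<sigma>2 n" .
  have "lind_term \<eta> n l \<le> G l (\<eta>\<^sup>2 * \<kappa> * (V l / C l) * s0\<^sup>2 / (\<epsilon>s n)\<^sup>2) / (real (N n l) * \<sigma>2 n)"
    unfolding lind_term_def using G_le N_pos[of n l] sigma2_pos[of n] by (intro divide_right_mono) auto
  also have "\<dots> \<le> G l (\<eta>\<^sup>2 * \<kappa> * (V l / C l) * s0\<^sup>2 / (\<epsilon>s n)\<^sup>2) / (\<kappa> * sqrt (V l / C l) * s0)"
    using denom_le \<kappa> VC s0 G_nonneg N_pos[of n l] sigma2_pos[of n] by (intro divide_left_mono) auto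
  finally show ?thesis unfolding s0_def .
qed

lemma lind_term_tendsto_0:
  assumes \<kappa>: "\<kappa> > 0" "\<forall>\<^sub>F n in sequentially. \<kappa> * (\<epsilon>s n)\<^sup>2 \<le> \<sigma>2 n" and "\<eta> > 0"
  shows "(\<lambda>n. lind_term \<eta> n l) \<longlonglongrightarrow> 0"
proof (cases "V l > 0")
  case False
  then show ?thesis by (simp add: lind_term_eq_0)
next
  case True
  define s0 where "s0 = sqrt (V 0 * C 0)"
  have s0: "s0 > 0" unfolding s0_def using sqrt_VC0_pos by simp
  define \<rho> where "\<rho> = \<eta>\<^sup>2 * \<kappa> * (V l / C l) * s0\<^sup>2"
  have \<rho>: "\<rho> > 0" unfolding \<rho>_def using True C_pos[of l] \<kappa> s0 \<open>\<eta> > 0\<close> by simp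
  have "filterlim (\<lambda>n. inverse ((\<epsilon>s n)\<^sup>2)) at_top sequentially"
    using tendsto_power[OF \<epsilon>s_tendsto, of 2] \<epsilon>s_pos
    by (intro filterlim_inverse_at_top always_eventually) (auto simp: less_imp_neq[OF \<epsilon>s_pos, symmetric])
  then have "filterlim (\<lambda>n. \<rho> / (\<epsilon>s n)\<^sup>2) at_top sequentially"
    using \<rho> filterlim_tendsto_pos_mult_at_top[OF tendsto_const] by (simp add: divide_inverse)
  from filterlim_compose[OF G_tendsto_0[of l] this]
  have "(\<lambda>n. G l (\<rho> / (\<epsilon>s n)\<^sup>2) / (\<kappa> * sqrt (V l / C l) * s0)) \<longlonglongrightarrow> 0 / (\<kappa> * sqrt (V l / C l) * s0)"
    by (intro tendsto_divide tendsto_const) (use \<kappa> s0 True C_pos[of l] in \<open>simp_all add: o_def\<close>)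
  moreover have "\<forall>\<^sub>F n in sequentially. lind_term \<eta> n l \<le> G l (\<rho> / (\<epsilon>s n)\<^sup>2) / (\<kappa> * sqrt (V l / C l) * s0)"
    using \<kappa>(2) by eventually_elim (use lind_term_le_fixed_level[OF True \<kappa>(1)] in \<open>simp add: \<rho>_def s0_def\<close>)
  ultimately show ?thesis
    by (intro tendsto_sandwich[OF always_eventually[OF allI[OF lind_term_nonneg]] _ tendsto_const]) auto
qed

lemma lind_sum_tendsto_0_if_tails_small:
  assumes \<kappa>: "\<kappa> > 0" "\<forall>\<^sub>F n in sequentially. \<kappa> * (\<epsilon>s n)\<^sup>2 \<le> \<sigma>2 n" and "\<eta> > 0"
    and tail: "\<And>\<delta>. \<delta> > 0 \<Longrightarrow> \<exists>l0. \<forall>\<^sub>F n in sequentially. (\<Sum>l=l0..L n. lind_term \<eta> n l) \<le> \<delta>"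
  shows "(\<lambda>n. \<Sum>l\<le>L n. lind_term \<eta> n l) \<longlonglongrightarrow> 0"
proof (rule tendstoI)
  fix \<delta> :: real assume "\<delta> > 0"
  obtain l0 where l0: "\<forall>\<^sub>F n in sequentially. (\<Sum>l=l0..L n. lind_term \<eta> n l) \<le> \<delta> / 2"
    using tail[of "\<delta> / 2"] \<open>\<delta> > 0\<close> by auto
  have "(\<lambda>n. \<Sum>l<l0. lind_term \<eta> n l) \<longlonglongrightarrow> 0"
    by (intro tendsto_null_sum lind_term_tendsto_0[OF \<kappa> \<open>\<eta> > 0\<close>])
  then have head: "\<forall>\<^sub>F n in sequentially. (\<Sum>l<l0. lind_term \<eta> n l) < \<delta> / 2"
    using \<open>\<delta> > 0\<close> by (intro order_tendstoD(2)) auto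
  show "\<forall>\<^sub>F n in sequentially. dist (\<Sum>l\<le>L n. lind_term \<eta> n l) 0 < \<delta>"
    using l0 head
  proof eventually_elim
    case (elim n)
    have "(\<Sum>l\<le>L n. lind_term \<eta> n l)
        = (\<Sum>l\<in>{..L n} - {l0..L n}. lind_term \<eta> n l) + (\<Sum>l=l0..L n. lind_term \<eta> n l)"
      by (rule sum.subset_diff) auto
    also have "(\<Sum>l\<in>{..L n} - {l0..L n}. lind_term \<eta> n l) \<le> (\<Sum>l<l0. lind_term \<eta> n l)"
      by (rule sum_mono2) (auto intro: lind_term_nonneg)
    finally have "(\<Sum>l\<le>L n. lind_term \<eta> n l) < \<delta>" using elim by linarith
    moreover have "(\<Sum>l\<le>L n. lind_term \<eta> n l) \<ge> 0" by (intro sum_nonneg lind_term_nonneg)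
    ultimately show ?case by (simp add: dist_real_def)
  qed
qed

lemma sum_weights_eq_1: "(\<Sum>l\<le>L n. V l / (real (N n l) * \<sigma>2 n)) = 1"
proof -
  have "(\<Sum>l\<le>L n. V l / (real (N n l) * \<sigma>2 n)) = (\<Sum>l\<le>L n. V l / real (N n l)) / \<sigma>2 n"
    by (simp add: sum_divide_distrib)
  then show ?thesis using sigma2_pos[of n] unfolding \<sigma>2_def by simp
qed

lemma lind_term_le_weight: "lind_term \<eta> n l \<le> V l / (real (N n l) * \<sigma>2 n)"
  unfolding lind_term_def using G_le_V N_pos[of n l] sigma2_pos[of n] by (intro divide_right_mono) auto

lemma lind_term_le_geometric:
  assumes \<kappa>: "\<kappa> > 0" "\<kappa> * (\<epsilon>s n)\<^sup>2 \<le> \<sigma>2 n"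
  shows "lind_term \<eta> n l \<le> sqrt (K * C') / (\<kappa> * sqrt (V 0 * C 0)) * exp (- (\<beta> - \<gamma>) / 2) ^ l"
proof (cases "V l > 0")
  case False
  then show ?thesis using lind_term_eq_0[OF False] \<kappa> K_pos C'_pos sqrt_VC0_pos by simp
next
  case True
  define s0 where "s0 = sqrt (V 0 * C 0)"
  have s0: "s0 > 0" unfolding s0_def using sqrt_VC0_pos by simp
  have VC: "sqrt (V l / C l) > 0" using True C_pos[of l] by simp
  have "lind_term \<eta> n l \<le> V l / (real (N n l) * \<sigma>2 n)" by (rule lind_term_le_weight)
  also have "\<dots> \<le> V l / (\<kappa> * sqrt (V l / C l) * s0)"
  proof -
    have "\<kappa> * sqrt (V l / C l) * s0 \<le> \<kappa> * sqrt (V l / C l) * S n"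
      using s0 \<kappa> VC mlmc_S_ge_first[of "L n"] unfolding s0_def S_def by (intro mult_left_mono) auto
    also have "\<dots> \<le> real (N n l) * \<sigma>2 n" by (rule N_sqrt_ratio_le_N_sigma2[OF \<kappa>])
    finally show ?thesis using True \<kappa> VC s0 N_pos[of n l] sigma2_pos[of n]
      by (intro divide_left_mono) auto
  qed
  also have "\<dots> = sqrt (V l * C l) / (\<kappa> * s0)"
  proof -
    have "V l = sqrt (V l) * sqrt (V l)" using True by simp
    then show ?thesis using True C_pos[of l] \<kappa> s0
      by (simp add: real_sqrt_divide real_sqrt_mult field_simps)
  qed
  also have "\<dots> \<le> sqrt (K * C') * exp (- (\<beta> - \<gamma>) / 2) ^ l / (\<kappa> * s0)"
    using \<kappa> s0 by (intro divide_right_mono sqrt_VC_le) auto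
  finally show ?thesis unfolding s0_def by simp
qed

lemma lind_tail_small_if_var_dominates:
  assumes "\<beta> > \<gamma>" and \<kappa>: "\<kappa> > 0" "\<forall>\<^sub>F n in sequentially. \<kappa> * (\<epsilon>s n)\<^sup>2 \<le> \<sigma>2 n" and "\<delta> > 0"
  shows "\<exists>l0. \<forall>\<^sub>F n in sequentially. (\<Sum>l=l0..L n. lind_term \<eta> n l) \<le> \<delta>"
proof -
  define q where "q = exp (- (\<beta> - \<gamma>) / 2)"
  have q: "0 \<le> q" "q < 1" unfolding q_def using \<open>\<beta> > \<gamma>\<close> by auto
  define c where "c = sqrt (K * C') / (\<kappa> * sqrt (V 0 * C 0))"
  have c: "c > 0" unfolding c_def using K_pos C'_pos \<kappa> sqrt_VC0_pos by simp
  have "(\<lambda>l. c * q ^ l / (1 - q)) \<longlonglongrightarrow> c * 0 / (1 - q)"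
    using q by (intro tendsto_intros LIMSEQ_power_zero) auto
  then have "\<forall>\<^sub>F l in sequentially. c * q ^ l / (1 - q) < \<delta>"
    using \<open>\<delta> > 0\<close> by (intro order_tendstoD(2)) auto
  then obtain l0 where l0: "c * q ^ l0 / (1 - q) < \<delta>"
    by (auto simp: eventually_sequentially)
  have "\<forall>\<^sub>F n in sequentially. (\<Sum>l=l0..L n. lind_term \<eta> n l) \<le> \<delta>"
    using \<kappa>(2)
  proof eventually_elim
    case (elim n)
    have "(\<Sum>l=l0..L n. lind_term \<eta> n l) \<le> (\<Sum>l=l0..L n. c * q ^ l)"
      unfolding c_def q_def by (intro sum_mono lind_term_le_geometric[OF \<kappa>(1) elim])
    also have "\<dots> = c * (\<Sum>l=l0..L n. q ^ l)" by (simp add: sum_distrib_left)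
    also have "\<dots> \<le> c * (q ^ l0 / (1 - q))" using sum_power_tail_le[OF q] c by (intro mult_left_mono) auto
    finally show ?case using l0 by simp
  qed
  then show ?thesis by blast
qed

lemma lind_term_le_lindeberg_ratio:
  assumes l: "l \<le> L n" and \<epsilon>: "\<epsilon>s n < c\<alpha>" and \<kappa>: "\<kappa> > 0" "\<kappa> * (\<epsilon>s n)\<^sup>2 \<le> \<sigma>2 n"
  shows "lind_term \<eta> n l
    \<le> V l / (real (N n l) * \<sigma>2 n) * lindeberg_ratio (\<eta>\<^sup>2 * \<kappa> / (c\<alpha>\<^sup>2 * exp (2 * \<alpha>) * C')) l"
proof (cases "V l > 0")
  case False
  then show ?thesis using lind_term_eq_0[OF False] V_nonneg[of l] by (simp add: lindeberg_ratio_def)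
next
  case True
  have "lind_term \<eta> n l \<le> G l (V l * (\<eta>\<^sup>2 * \<kappa> / (c\<alpha>\<^sup>2 * exp (2 * \<alpha>) * C') * (mlmc_S V C l)\<^sup>2
      * exp ((2 * \<alpha> - \<gamma>) * real l))) / (real (N n l) * \<sigma>2 n)"
    unfolding lind_term_def using G_antimono[OF lindeberg_threshold_le[OF l \<epsilon> \<kappa>]] N_pos[of n l] sigma2_pos[of n]
    by (intro divide_right_mono) auto
  then show ?thesis using True by (simp add: lindeberg_ratio_def)
qed

lemma lind_tail_small_if_lindeberg:
  assumes lindeberg: "\<And>\<nu>. \<nu> > 0 \<Longrightarrow> lindeberg_ratio \<nu> \<longlonglongrightarrow> 0"
    and \<kappa>: "\<kappa> > 0" "\<forall>\<^sub>F n in sequentially. \<kappa> * (\<epsilon>s n)\<^sup>2 \<le> \<sigma>2 n" and "\<eta> > 0" "\<delta> > 0"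
  shows "\<exists>l0. \<forall>\<^sub>F n in sequentially. (\<Sum>l=l0..L n. lind_term \<eta> n l) \<le> \<delta>"
proof -
  define \<nu> where "\<nu> = \<eta>\<^sup>2 * \<kappa> / (c\<alpha>\<^sup>2 * exp (2 * \<alpha>) * C')"
  have "\<nu> > 0" unfolding \<nu>_def using \<open>\<eta> > 0\<close> \<kappa> c\<alpha>_pos C'_pos by simp
  then have "\<forall>\<^sub>F l in sequentially. lindeberg_ratio \<nu> l < \<delta>"
    using lindeberg \<open>\<delta> > 0\<close> by (intro order_tendstoD(2)) auto
  then obtain l0 where l0: "\<And>l. l \<ge> l0 \<Longrightarrow> lindeberg_ratio \<nu> l < \<delta>"
    by (auto simp: eventually_sequentially)
  have "\<forall>\<^sub>F n in sequentially. (\<Sum>l=l0..L n. lind_term \<eta> n l) \<le> \<delta>"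
    using \<kappa>(2) eventually_eps_less[OF c\<alpha>_pos]
  proof eventually_elim
    case (elim n)
    have weight_nonneg: "V l / (real (N n l) * \<sigma>2 n) \<ge> 0" for l
      using V_nonneg[of l] N_pos[of n l] sigma2_pos[of n] by simp
    have "(\<Sum>l=l0..L n. lind_term \<eta> n l) \<le> (\<Sum>l=l0..L n. V l / (real (N n l) * \<sigma>2 n) * \<delta>)"
    proof (rule sum_mono)
      fix l assume l: "l \<in> {l0..L n}"
      have "lind_term \<eta> n l \<le> V l / (real (N n l) * \<sigma>2 n) * lindeberg_ratio \<nu> l"
        unfolding \<nu>_def using l by (intro lind_term_le_lindeberg_ratio[OF _ elim(2) \<kappa>(1) elim(1)]) auto
      also have "\<dots> \<le> V l / (real (N n l) * \<sigma>2 n) * \<delta>"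
        using l0[of l] l weight_nonneg[of l] by (intro mult_left_mono) auto
      finally show "lind_term \<eta> n l \<le> V l / (real (N n l) * \<sigma>2 n) * \<delta>" .
    qed
    also have "\<dots> \<le> (\<Sum>l\<le>L n. V l / (real (N n l) * \<sigma>2 n)) * \<delta>"
      unfolding sum_distrib_right[symmetric]
      using \<open>\<delta> > 0\<close> weight_nonneg by (intro mult_right_mono sum_mono2) auto
    finally show ?case using sum_weights_eq_1[of n] by simp
  qed
  then show ?thesis by blast
qed

theorem lind_sum_tendsto_0:
  assumes "\<eta> > 0"
    and S_unbounded: "\<beta> = \<gamma> \<Longrightarrow> \<gamma> \<le> 2 * \<alpha> \<and> filterlim (mlmc_S V C) at_top sequentially"
    and S_growth: "\<gamma> > \<beta> \<Longrightarrow>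
      \<exists>\<upsilon>. \<upsilon> < 2 * \<alpha> \<and> liminf (\<lambda>k. ereal (mlmc_S V C k * exp ((\<upsilon> - \<gamma>) * real k / 2))) > 1"
    and lindeberg: "\<And>\<nu>. \<beta> \<le> \<gamma> \<Longrightarrow> \<nu> > 0 \<Longrightarrow> lindeberg_ratio \<nu> \<longlonglongrightarrow> 0"
  shows "(\<lambda>n. \<Sum>l\<le>L n. lind_term \<eta> n l) \<longlonglongrightarrow> 0"
proof -
  obtain \<kappa> where \<kappa>: "\<kappa> > 0" "\<forall>\<^sub>F n in sequentially. \<kappa> * (\<epsilon>s n)\<^sup>2 \<le> \<sigma>2 n"
  proof (cases "\<beta> > \<gamma>")
    case True
    then show ?thesis using that sigma2_lower_if_var_dominates by blast
  next
    case False
    have "(\<lambda>k. exp ((\<gamma> - 2 * \<alpha>) * real k) / (mlmc_S V C k)\<^sup>2) \<longlonglongrightarrow> 0"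
    proof (cases "\<beta> = \<gamma>")
      case True
      then show ?thesis using S_unbounded cost_ratio_tendsto_0_if_S_unbounded by blast
    next
      case False
      then show ?thesis using S_growth \<open>\<not> \<beta> > \<gamma>\<close> cost_ratio_tendsto_0_if_liminf by force
    qed
    then show ?thesis using that sigma2_lower_if_cost_ratio_vanishes by blast
  qed
  have "\<exists>l0. \<forall>\<^sub>F n in sequentially. (\<Sum>l=l0..L n. lind_term \<eta> n l) \<le> \<delta>" if "\<delta> > 0" for \<delta>
  proof (cases "\<beta> > \<gamma>")
    case True
    show ?thesis by (rule lind_tail_small_if_var_dominates[OF True \<kappa> that])
  next
    case False
    then show ?thesis
      using lind_tail_small_if_lindeberg[OF _ \<kappa> \<open>\<eta> > 0\<close> that] lindeberg by simp
  qed
  then show ?thesis by (rule lind_sum_tendsto_0_if_tails_small[OF \<kappa> \<open>\<eta> > 0\<close>])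
qed

end

theorem theorem1:
  fixes M :: "'a measure"
    and X :: "'a \<Rightarrow> real"
    and Xs :: "nat \<Rightarrow> 'a \<Rightarrow> real"
    and D :: "nat \<Rightarrow> nat \<Rightarrow> 'a \<Rightarrow> real"
    and V C :: "nat \<Rightarrow> real"
    and \<alpha> \<beta> \<gamma> c\<alpha> :: real
  assumes P: "prob_space M"
    and X_L2: "X \<in> borel_measurable M" "integrable M (\<lambda>\<omega>. (X \<omega>)\<^sup>2)"
    and Xs_L2: "\<And>l. Xs l \<in> borel_measurable M" "\<And>l. integrable M (\<lambda>\<omega>. (Xs l \<omega>)\<^sup>2)"
    and V_def: "V = (\<lambda>l. \<integral>\<omega>. (dX Xs l \<omega> - (\<integral>\<omega>'. dX Xs l \<omega>' \<partial>M))\<^sup>2 \<partial>M)"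
    and D_meas: "\<And>l i. D l i \<in> borel_measurable M"
    and D_indep: "prob_space.indep_vars M (\<lambda>_. borel) (\<lambda>p. D (fst p) (snd p)) (UNIV \<times> {1..})"
    and D_law: "\<And>l i. i \<ge> 1 \<Longrightarrow> distr M borel (D l i) = distr M borel (dX Xs l)"
    and pos: "\<alpha> > 0" "\<beta> > 0" "\<gamma> > 0" "c\<alpha> > 0"
    and minle: "min \<beta> \<gamma> \<le> 2 * \<alpha>"
    and bias: "\<And>l. \<bar>(\<integral>\<omega>. X \<omega> - Xs l \<omega> \<partial>M)\<bar> \<le> c\<alpha> * exp (- \<alpha> * real l)"
    and var: "\<exists>K>0. \<forall>l. V l \<le> K * exp (- \<beta> * real l)"
    and cost: "\<exists>c C'. 0 < c \<and> c < C' \<and>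
                 (\<forall>l. c * exp (\<gamma> * real l) < C l \<and> C l < C' * exp (\<gamma> * real l))"
    and V0: "V 0 > 0"
    and case_i: "\<beta> = \<gamma> \<Longrightarrow> filterlim (mlmc_S V C) at_top sequentially \<and>
                   lindeberg_cond M Xs V C \<alpha> \<gamma>"
    and case_ii: "\<gamma> > \<beta> \<Longrightarrow> \<beta> < 2 * \<alpha> \<and> lindeberg_cond M Xs V C \<alpha> \<gamma> \<and>
                   (\<exists>\<upsilon>. \<beta> \<le> \<upsilon> \<and> \<upsilon> < 2 * \<alpha> \<and>
                      liminf (\<lambda>k. ereal (mlmc_S V C k * exp ((\<upsilon> - \<gamma>) * real k / 2))) > 1)"
  shows "\<forall>\<epsilon>s :: nat \<Rightarrow> real. (\<forall>n. \<epsilon>s n > 0) \<longrightarrow> \<epsilon>s \<longlonglongrightarrow> 0 \<longrightarrow>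
     weak_conv_m
       (\<lambda>n. distr M borel (\<lambda>\<omega>.
          (mlmc_A V C c\<alpha> \<alpha> D (\<epsilon>s n) \<omega> - (\<integral>\<omega>'. Xs (mlmc_L c\<alpha> \<alpha> (\<epsilon>s n)) \<omega>' \<partial>M)) /
          sqrt (\<integral>\<omega>'. (mlmc_A V C c\<alpha> \<alpha> D (\<epsilon>s n) \<omega>' -
                     (\<integral>\<omega>''. mlmc_A V C c\<alpha> \<alpha> D (\<epsilon>s n) \<omega>'' \<partial>M))\<^sup>2 \<partial>M)))
       std_normal_distribution"
proof (intro allI impI, goal_cases)
  case (1 \<epsilon>s)
  then have \<epsilon>s_pos: "\<forall>n. \<epsilon>s n > 0" and \<epsilon>s_tendsto: "\<epsilon>s \<longlonglongrightarrow> 0" by simp_all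
  interpret mlmc_samples M Xs D
    using P Xs_L2 D_meas D_indep D_law by (simp add: mlmc_samples_def mlmc_samples_axioms_def)
  have V_eq: "V = level_var"
    unfolding V_def level_var_def level_mean_def ..
  obtain K where K: "\<And>l. V l \<le> K * exp (- \<beta> * real l)"
    using var by blast
  obtain C' where C: "\<And>l. 0 < C l \<and> C l \<le> C' * exp (\<gamma> * real l)"
    using cost by (smt (verit) exp_gt_zero mult_pos_pos)
  interpret mlmc_tails level_var C \<alpha> \<beta> \<gamma> c\<alpha> K C' \<epsilon>s level_tail
    using pos K C V0 \<epsilon>s_pos \<epsilon>s_tendsto level_var_nonneg level_tail_nonneg level_tail_le_level_var
      level_tail_antimono level_tail_tendsto_0
    by unfold_locales (auto simp: V_eq)
  have "(\<lambda>n. \<Sum>l\<le>L n. lind_term \<eta> n l) \<longlonglongrightarrow> 0" if "\<eta> > 0" for \<eta>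
  proof (rule lind_sum_tendsto_0[OF that])
    show "lindeberg_ratio \<nu> \<longlonglongrightarrow> 0" if "\<beta> \<le> \<gamma>" "\<nu> > 0" for \<nu>
      unfolding lindeberg_ratio_def
      using lindeberg_cond_tendsto that case_i case_ii unfolding V_eq by force
  qed (use minle case_i case_ii in \<open>auto simp: V_eq\<close>)
  then show ?case
    unfolding V_eq mlmc_A_eq_ml_estimate
    using ml_estimate_clt[of N L] N_pos sigma2_pos
    unfolding lind_term_def \<sigma>2_def L_def N_def by simp
qed

end
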